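(* Let $E$ be a graph, $S\subseteq R(E)$ and $K$ a field with involution. Define the graph $E_S$ by $E_S^0=E^0\cup\{v':v\in R(E)\setminus S\}$ and $E_S^1=E^1\cup\{e':e\in E^1,\ \mathbf{r}(e)\in R(E)\setminus S\}$ (new symbols $v'$, $e'$), where $\mathbf{s},\mathbf{r}$ agree with those of $E$ on $E^1$, and $\mathbf{s}(e')=\mathbf{s}(e)$, $\mathbf{r}(e')=\mathbf{r}(e)'$. Define $\phi$ on vertices of $E_S$ by $\phi(v)=v$ if $v\notin R(E)\setminus S$, $\phi(v)=\sum_{e\in\mathbf{s}^{-1}(v)}ee^*$ if $v\in R(E)\setminus S$, and $\phi(v')=v-\sum_{e\in\mathbf{s}^{-1}(v)}ee^*$ for $v\in R(E)\setminus S$; on edges by $\phi(e)=e\,\phi(\mathbf{r}(e))$ for $e\in E^1$ and $\phi(e')=e\,\phi(\mathbf{r}(e)')$; and on ghost edges by $\phi(f^* )=\phi(f)^*$ for $f\in E_S^1$ (all values in $CL_K(E,S)$). Then $\phi$ extends uniquely to a $K$-algebra $*$-isomorphism $\phi:L_K(E_S)\to CL_K(E,S)$.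
   Context: A (directed) graph $E=(E^0,E^1,\mathbf{s},\mathbf{r})$ has vertex set $E^0$, edge set $E^1$, source and range maps; no finiteness or countability is assumed. Paths are vertices or sequences $e_1\cdots e_n$ of edges with $\mathbf{r}(e_i)=\mathbf{s}(e_{i+1})$. A vertex $v$ is regular if $\mathbf{s}^{-1}(v)$ is nonempty and finite; $R(E)$ is the set of regular vertices. $K$ has an arbitrary involution $a\mapsto a^*$. For $S\subseteq R(E)$, $CL_K(E,S)$ is the free $K$-algebra generated by $E^0\cup E^1\cup\{e^*:e\in E^1\}$ subject to (V) $vw=\delta_{v,w}v$; (E1) $\mathbf{s}(e)e=e\mathbf{r}(e)=e$; (E2) $\mathbf{r}(e)e^*=e^*\mathbf{s}(e)=e^*$; (CK1) $e^*f=\delta_{e,f}\mathbf{r}(e)$; (SCK2) $v=\sum_{e\in\mathbf{s}^{-1}(v)}ee^*$ for $v\in S$; and $L_K(F)=CL_K(F,R(F))$ for any graph $F$. These are involutive $K$-algebras via $(\sum a_ip_iq_i^* )^*=\sum a_i^*q_ip_i^*$, where $p^*=e_n^*\cdots e_1^*$, $v^*=v$. A $*$-isomorphism is an algebra isomorphism $f$ with $f(x^* )=f(x)^*$. *)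

theory Defs
  imports Main
begin

record ('v,'e) graph =
  verts :: "'v set"
  edges :: "'e set"
  src   :: "'e \<Rightarrow> 'v"
  rng   :: "'e \<Rightarrow> 'v"

definition wf_graph :: "('v,'e) graph \<Rightarrow> bool" where
  "wf_graph G \<longleftrightarrow> (\<forall>e\<in>edges G. src G e \<in> verts G \<and> rng G e \<in> verts G)"

definition out_edges :: "('v,'e) graph \<Rightarrow> 'v \<Rightarrow> 'e set" where
  "out_edges G v = {e \<in> edges G. src G e = v}"

definition regular :: "('v,'e) graph \<Rightarrow> 'v set" where
  "regular G = {v \<in> verts G. out_edges G v \<noteq> {} \<and> finite (out_edges G v)}"

text \<open>Generators: vertices, edges and ghost edges.\<close>
datatype ('v,'e) gen = GV 'v | GE 'e | GG 'e

fun gstar :: "('v,'e) gen \<Rightarrow> ('v,'e) gen" where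
  "gstar (GV v) = GV v"
| "gstar (GE e) = GG e"
| "gstar (GG e) = GE e"

definition gens :: "('v,'e) graph \<Rightarrow> ('v,'e) gen set" where
  "gens G = GV ` verts G \<union> GE ` edges G \<union> GG ` edges G"

text \<open>Elements of the free non-unital K-algebra on generators X: finitely supported
  coefficient functions on nonempty words in X.\<close>
type_synonym ('g,'k) fa = "'g list \<Rightarrow> 'k"

definition fa_carrier :: "'g set \<Rightarrow> ('g,'k::zero) fa set" where
  "fa_carrier X = {p. finite {w. p w \<noteq> 0} \<and> (\<forall>w. p w \<noteq> 0 \<longrightarrow> w \<noteq> [] \<and> set w \<subseteq> X)}"

definition fa_zero :: "('g,'k::zero) fa" where
  "fa_zero = (\<lambda>w. 0)"

definition fa_add :: "('g,'k::plus) fa \<Rightarrow> ('g,'k) fa \<Rightarrow> ('g,'k) fa" where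
  "fa_add p q = (\<lambda>w. p w + q w)"

definition fa_diff :: "('g,'k::minus) fa \<Rightarrow> ('g,'k) fa \<Rightarrow> ('g,'k) fa" where
  "fa_diff p q = (\<lambda>w. p w - q w)"

definition fa_smul :: "'k::times \<Rightarrow> ('g,'k) fa \<Rightarrow> ('g,'k) fa" where
  "fa_smul a p = (\<lambda>w. a * p w)"

definition fa_sum :: "'i set \<Rightarrow> ('i \<Rightarrow> ('g,'k::comm_monoid_add) fa) \<Rightarrow> ('g,'k) fa" where
  "fa_sum A f = (\<lambda>w. \<Sum>i\<in>A. f i w)"

definition fa_mult :: "('g,'k::comm_semiring_0) fa \<Rightarrow> ('g,'k) fa \<Rightarrow> ('g,'k) fa" where
  "fa_mult p q = (\<lambda>w. \<Sum>i\<le>length w. p (take i w) * q (drop i w))"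

definition fa_gen :: "'g \<Rightarrow> ('g,'k::{zero,one}) fa" where
  "fa_gen x = (\<lambda>w. if w = [x] then 1 else 0)"

fun fa_listprod :: "('g,'k::comm_semiring_0) fa list \<Rightarrow> ('g,'k) fa" where
  "fa_listprod [] = fa_zero"
| "fa_listprod [p] = p"
| "fa_listprod (p # ps) = fa_mult p (fa_listprod ps)"

text \<open>The unique algebra homomorphism of free algebras extending a map on generators.\<close>
definition fa_eval :: "('g \<Rightarrow> ('h,'k::comm_semiring_0) fa) \<Rightarrow> ('g,'k) fa \<Rightarrow> ('h,'k) fa" where
  "fa_eval f p = (\<lambda>w. \<Sum>u\<in>{u. p u \<noteq> 0}. p u * fa_listprod (map f u) w)"

definition fa_star :: "('k \<Rightarrow> 'k) \<Rightarrow> (('v,'e) gen,'k) fa \<Rightarrow> (('v,'e) gen,'k) fa" where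
  "fa_star cnj p = (\<lambda>w. cnj (p (rev (map gstar w))))"

inductive_set fa_ideal :: "'g set \<Rightarrow> ('g,'k::field) fa set \<Rightarrow> ('g,'k) fa set"
  for X :: "'g set" and R :: "('g,'k) fa set" where
  base: "r \<in> R \<Longrightarrow> r \<in> fa_ideal X R"
| zero: "fa_zero \<in> fa_ideal X R"
| add: "p \<in> fa_ideal X R \<Longrightarrow> q \<in> fa_ideal X R \<Longrightarrow> fa_add p q \<in> fa_ideal X R"
| smul: "p \<in> fa_ideal X R \<Longrightarrow> fa_smul a p \<in> fa_ideal X R"
| lmult: "p \<in> fa_ideal X R \<Longrightarrow> a \<in> fa_carrier X \<Longrightarrow> fa_mult a p \<in> fa_ideal X R"
| rmult: "p \<in> fa_ideal X R \<Longrightarrow> a \<in> fa_carrier X \<Longrightarrow> fa_mult p a \<in> fa_ideal X R"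

definition ghat :: "'g \<Rightarrow> ('g,'k::field) fa" where
  "ghat x = fa_gen x"

text \<open>The defining relations, written as elements lhs - rhs.\<close>
definition CL_rels :: "('v,'e) graph \<Rightarrow> 'v set \<Rightarrow> (('v,'e) gen,'k::field) fa set" where
  "CL_rels G S =
     {fa_diff (fa_mult (ghat (GV v)) (ghat (GV w))) (if v = w then ghat (GV v) else fa_zero)
        | v w. v \<in> verts G \<and> w \<in> verts G}
   \<union> {fa_diff (fa_mult (ghat (GV (src G e))) (ghat (GE e))) (ghat (GE e)) | e. e \<in> edges G}
   \<union> {fa_diff (fa_mult (ghat (GE e)) (ghat (GV (rng G e)))) (ghat (GE e)) | e. e \<in> edges G}
   \<union> {fa_diff (fa_mult (ghat (GV (rng G e))) (ghat (GG e))) (ghat (GG e)) | e. e \<in> edges G}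
   \<union> {fa_diff (fa_mult (ghat (GG e)) (ghat (GV (src G e)))) (ghat (GG e)) | e. e \<in> edges G}
   \<union> {fa_diff (fa_mult (ghat (GG e)) (ghat (GE f))) (if e = f then ghat (GV (rng G e)) else fa_zero)
        | e f. e \<in> edges G \<and> f \<in> edges G}
   \<union> {fa_diff (ghat (GV v)) (fa_sum (out_edges G v) (\<lambda>e. fa_mult (ghat (GE e)) (ghat (GG e))))
        | v. v \<in> S}"

text \<open>CL_K(G,S) is fa_carrier (gens G) modulo CL_ideal G S; L_K(G) = CL_K(G,R(G)).\<close>
definition CL_ideal :: "('v,'e) graph \<Rightarrow> 'v set \<Rightarrow> (('v,'e) gen,'k::field) fa set" where
  "CL_ideal G S = fa_ideal (gens G) (CL_rels G S)"

definition L_ideal :: "('v,'e) graph \<Rightarrow> (('v,'e) gen,'k::field) fa set" where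
  "L_ideal G = CL_ideal G (regular G)"

text \<open>A K-algebra homomorphism between quotients fa_carrier X1 / I1 -> fa_carrier X2 / I2,
  represented by a map on representatives.\<close>
definition hom_mod :: "'g set \<Rightarrow> ('g,'k::field) fa set \<Rightarrow> 'h set \<Rightarrow> ('h,'k) fa set
    \<Rightarrow> (('g,'k) fa \<Rightarrow> ('h,'k) fa) \<Rightarrow> bool" where
  "hom_mod X1 I1 X2 I2 \<Psi> \<longleftrightarrow>
     (\<forall>p\<in>fa_carrier X1. \<Psi> p \<in> fa_carrier X2)
   \<and> (\<forall>p\<in>fa_carrier X1. \<forall>q\<in>fa_carrier X1. fa_diff p q \<in> I1 \<longrightarrow> fa_diff (\<Psi> p) (\<Psi> q) \<in> I2)
   \<and> (\<forall>p\<in>fa_carrier X1. \<forall>q\<in>fa_carrier X1. fa_diff (\<Psi> (fa_add p q)) (fa_add (\<Psi> p) (\<Psi> q)) \<in> I2)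
   \<and> (\<forall>a. \<forall>p\<in>fa_carrier X1. fa_diff (\<Psi> (fa_smul a p)) (fa_smul a (\<Psi> p)) \<in> I2)
   \<and> (\<forall>p\<in>fa_carrier X1. \<forall>q\<in>fa_carrier X1. fa_diff (\<Psi> (fa_mult p q)) (fa_mult (\<Psi> p) (\<Psi> q)) \<in> I2)"

text \<open>Inl = old vertices/edges, Inr v = v', Inr e = e'.\<close>
definition ES_graph :: "('v,'e) graph \<Rightarrow> 'v set \<Rightarrow> ('v + 'v, 'e + 'e) graph" where
  "ES_graph E S =
    \<lparr> verts = Inl ` verts E \<union> Inr ` (regular E - S),
      edges = Inl ` edges E \<union> Inr ` {e \<in> edges E. rng E e \<in> regular E - S},
      src = (\<lambda>x. case x of Inl e \<Rightarrow> Inl (src E e) | Inr e \<Rightarrow> Inl (src E e)),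
      rng = (\<lambda>x. case x of Inl e \<Rightarrow> Inl (rng E e) | Inr e \<Rightarrow> Inr (rng E e)) \<rparr>"

definition Psum :: "('v,'e) graph \<Rightarrow> 'v \<Rightarrow> (('v,'e) gen,'k::field) fa" where
  "Psum E v = fa_sum (out_edges E v) (\<lambda>e. fa_mult (ghat (GE e)) (ghat (GG e)))"

definition phi_vert :: "('v,'e) graph \<Rightarrow> 'v set \<Rightarrow> 'v + 'v \<Rightarrow> (('v,'e) gen,'k::field) fa" where
  "phi_vert E S x = (case x of
      Inl v \<Rightarrow> (if v \<in> regular E - S then Psum E v else ghat (GV v))
    | Inr v \<Rightarrow> fa_diff (ghat (GV v)) (Psum E v))"

definition phi_edge :: "('v,'e) graph \<Rightarrow> 'v set \<Rightarrow> 'e + 'e \<Rightarrow> (('v,'e) gen,'k::field) fa" where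
  "phi_edge E S x = (case x of
      Inl e \<Rightarrow> fa_mult (ghat (GE e)) (phi_vert E S (Inl (rng E e)))
    | Inr e \<Rightarrow> fa_mult (ghat (GE e)) (phi_vert E S (Inr (rng E e))))"

definition phi_gen :: "('k \<Rightarrow> 'k) \<Rightarrow> ('v,'e) graph \<Rightarrow> 'v set \<Rightarrow> ('v + 'v, 'e + 'e) gen
    \<Rightarrow> (('v,'e) gen,'k::field) fa" where
  "phi_gen cnj E S g = (case g of
      GV x \<Rightarrow> phi_vert E S x
    | GE f \<Rightarrow> phi_edge E S f
    | GG f \<Rightarrow> fa_star cnj (phi_edge E S f))"

end

theory Submission
  imports Defs "HOL-Library.Poly_Mapping"
begin

text \<open>
  The map \<phi> sends a vertex v \<in> R(E)\<setminus>S to the idempotent \<Sum>e e* and v' to its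
  complement v - \<Sum>e e*, so that \<phi>(v) + \<phi>(v') = v.  Its inverse \<psi> sends v, e, e*
  to v + v', e + e', e* + e'* (dropping primed summands that do not exist).  Both maps
  respect the defining relations, and \<psi>\<circ>\<phi> and \<phi>\<circ>\<psi> fix all generators modulo
  the respective ideals.  The one non-formal step is \<psi>(\<Sum>e e*) = \<Sum>(e + e')(e* + e'*):
  the cross terms vanish because e and e' have different ranges in E_S, and what remains
  is the Cuntz-Krieger sum at v in E_S, which equals v in L_K(E_S) since v is regular there.
\<close>

section \<open>Noncommutative polynomials\<close>

text \<open>
  With words under concatenation as exponent monoid, the finitely supported functions from
  'g list to K form the free unital K-algebra on 'g; the free non-unital algebra of the
  definitions is its part supported on nonempty words.
\<close>

instantiation list :: (type) monoid_add
begin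
definition zero_list_def: "0 = []"
definition plus_list_def: "(+) = (@)"
instance by standard (simp_all add: zero_list_def plus_list_def)
end

lemma plus_list_eq [simp]: "(xs::'a list) + ys = xs @ ys"
  by (simp add: plus_list_def)

lemma zero_list_eq [simp]: "(0::'a list) = []"
  by (simp add: zero_list_def)

type_synonym ('g,'k) ncpoly = "'g list \<Rightarrow>\<^sub>0 'k"

abbreviation lookup where "lookup \<equiv> Poly_Mapping.lookup"
abbreviation keys where "keys \<equiv> Poly_Mapping.keys"
abbreviation single where "single \<equiv> Poly_Mapping.single"

lemma single_nil_one [simp]: "single [] (1::'k::field) = 1"
  using single_one[where 'a="'g list", where 'b='k] by simp

lemma lookup_mult_words:
  fixes x y :: "('g,'k::field) ncpoly"
  shows "lookup (x * y) w = (\<Sum>i\<le>length w. lookup x (take i w) * lookup y (drop i w))"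
proof -
  have "lookup (x * y) w = prod_fun (lookup x) (lookup y) w"
    by (simp add: times_poly_mapping.rep_eq)
  also have "\<dots> = (\<Sum>(a, b). lookup x a * lookup y b when w = a + b)"
    by (rule prod_fun_unfold_prod) auto
  also have "\<dots> = (\<Sum>ab\<in>(\<lambda>i. (take i w, drop i w)) ` {..length w}.
        (case ab of (a,b) \<Rightarrow> lookup x a * lookup y b when w = a + b))"
  proof (rule Sum_any.expand_superset)
    show "finite ((\<lambda>i. (take i w, drop i w)) ` {..length w})" by simp
    show "{ab. (case ab of (a,b) \<Rightarrow> lookup x a * lookup y b when w = a + b) \<noteq> 0}
        \<subseteq> (\<lambda>i. (take i w, drop i w)) ` {..length w}"
    proof clarify
      fix a b assume "(lookup x a * lookup y b when w = a + b) \<noteq> 0"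
      then have "w = a @ b" by (simp add: when_def split: if_splits)
      then show "(a, b) \<in> (\<lambda>i. (take i w, drop i w)) ` {..length w}"
        by (intro image_eqI[of _ _ "length a"]) auto
    qed
  qed
  also have "\<dots> = (\<Sum>i\<le>length w. lookup x (take i w) * lookup y (drop i w))"
  proof (subst sum.reindex)
    show "inj_on (\<lambda>i. (take i w, drop i w)) {..length w}"
      by (rule inj_onI) (metis atMost_iff length_take min.absorb2 prod.inject)
  qed simp
  finally show ?thesis .
qed

definition scalar :: "'k \<Rightarrow> ('g,'k::field) ncpoly" where
  "scalar a = single [] a"

lemma lookup_scalar_mult: "lookup (scalar a * x) w = a * lookup x w"
proof -
  have "lookup (scalar a * x) w
      = lookup (scalar a) (take 0 w) * lookup x (drop 0 w)
        + (\<Sum>i<length w. lookup (scalar a) (take (Suc i) w) * lookup x (drop (Suc i) w))"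
    unfolding lookup_mult_words by (rule sum.atMost_shift)
  also have "(\<Sum>i<length w. lookup (scalar a) (take (Suc i) w) * lookup x (drop (Suc i) w)) = 0"
    by (rule sum.neutral) (auto simp: scalar_def lookup_single when_def)
  finally show ?thesis by (simp add: scalar_def lookup_single)
qed

lemma lookup_mult_scalar: "lookup (x * scalar a) w = lookup x w * a"
proof -
  have "lookup (x * scalar a) w
      = (\<Sum>i\<in>{length w}. lookup x (take i w) * lookup (scalar a) (drop i w))"
    unfolding lookup_mult_words
    by (rule sum.mono_neutral_right) (auto simp: scalar_def lookup_single when_def)
  then show ?thesis by (simp add: scalar_def lookup_single)
qed

lemma scalar_commute: "scalar a * x = x * scalar a"
  by (rule poly_mapping_eqI) (simp add: lookup_scalar_mult lookup_mult_scalar mult.commute)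

lemma scalar_zero [simp]: "scalar 0 = 0"
  by (simp add: scalar_def)

lemma scalar_one [simp]: "scalar 1 = 1"
  by (simp add: scalar_def)

lemma scalar_mult: "scalar (a * b) = scalar a * scalar b"
  by (simp add: scalar_def mult_single)

lemma scalar_add: "scalar (a + b) = scalar a + scalar b"
  by (simp add: scalar_def single_add)

lemma scalar_mult_single: "scalar a * single u b = single u (a * b)"
  by (simp add: scalar_def mult_single)

lemma scalar_minus_one: "scalar (-1) * x = - x"
  by (rule poly_mapping_eqI) (simp add: lookup_scalar_mult)

lemma scalar_mult_mult: "scalar a * x * (scalar b * y) = scalar (a * b) * (x * y)"
proof -
  have "scalar a * x * (scalar b * y) = scalar a * (x * scalar b) * y" by (simp add: mult.assoc)
  also have "\<dots> = scalar a * (scalar b * x) * y" by (simp only: scalar_commute)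
  finally show ?thesis by (simp add: scalar_mult mult.assoc)
qed

lemma keys_scalar_mult: "keys (scalar a * x) \<subseteq> keys x"
  by (auto simp: in_keys_iff lookup_scalar_mult)

lemma monomial_expansion: "x = (\<Sum>u\<in>keys x. single u (lookup x u))"
proof (rule poly_mapping_eqI)
  fix w
  have "lookup (\<Sum>u\<in>keys x. single u (lookup x u)) w = (\<Sum>u\<in>keys x. if u = w then lookup x u else 0)"
    by (simp add: lookup_sum lookup_single when_def)
  also have "\<dots> = lookup x w" by (simp add: in_keys_iff)
  finally show "lookup x w = lookup (\<Sum>u\<in>keys x. single u (lookup x u)) w" by simp
qed

lemma prod_list_single_gens: "prod_list (map (\<lambda>g. single [g] (1::'k::field)) u) = single u 1"
  by (induction u) (simp_all add: mult_single)

definition nc_over :: "'g set \<Rightarrow> ('g,'k::field) ncpoly \<Rightarrow> bool" where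
  "nc_over X x \<longleftrightarrow> (\<forall>u\<in>keys x. u \<noteq> [] \<and> set u \<subseteq> X)"

lemma nil_notin_keys: "nc_over X x \<Longrightarrow> [] \<notin> keys x"
  by (auto simp: nc_over_def)

lemma nc_over_zero [simp]: "nc_over X 0"
  by (simp add: nc_over_def)

lemma nc_over_add [intro]: "nc_over X x \<Longrightarrow> nc_over X y \<Longrightarrow> nc_over X (x + y)"
  unfolding nc_over_def using keys_add[of x y] by blast

lemma nc_over_diff [intro]: "nc_over X x \<Longrightarrow> nc_over X y \<Longrightarrow> nc_over X (x - y)"
  unfolding nc_over_def using keys_diff[of x y] by blast

lemma nc_over_scalar_mult [intro]: "nc_over X x \<Longrightarrow> nc_over X (scalar a * x)"
  unfolding nc_over_def using keys_scalar_mult[of a x] by blast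

lemma nc_over_mult [intro]:
  assumes "nc_over X x" "nc_over X y"
  shows "nc_over X (x * y)"
  unfolding nc_over_def
proof
  fix w assume "w \<in> keys (x * y)"
  then obtain a b where "w = a + b" "a \<in> keys x" "b \<in> keys y"
    using keys_mult[of x y] by blast
  then show "w \<noteq> [] \<and> set w \<subseteq> X" using assms by (auto simp: nc_over_def)
qed

lemma nc_over_sum [intro]: "(\<And>i. i \<in> B \<Longrightarrow> nc_over X (f i)) \<Longrightarrow> nc_over X (sum f B)"
  by (induction B rule: infinite_finite_induct) (simp_all add: nc_over_add)

lemma nc_over_single [intro]: "g \<in> X \<Longrightarrow> nc_over X (single [g] a)"
  by (simp add: nc_over_def)

lemma nc_over_prod_list:
  "u \<noteq> [] \<Longrightarrow> (\<And>g. g \<in> set u \<Longrightarrow> nc_over X (F g)) \<Longrightarrow> nc_over X (prod_list (map F u))"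
proof (induction u)
  case (Cons a u)
  then show ?case by (cases "u = []") (simp_all add: nc_over_mult)
qed simp

definition nc_eval :: "('g \<Rightarrow> ('h,'k::field) ncpoly) \<Rightarrow> ('g,'k) ncpoly \<Rightarrow> ('h,'k) ncpoly" where
  "nc_eval F x = (\<Sum>u\<in>keys x. scalar (lookup x u) * prod_list (map F u))"

lemma nc_eval_superset:
  assumes "finite B" "keys x \<subseteq> B"
  shows "nc_eval F x = (\<Sum>u\<in>B. scalar (lookup x u) * prod_list (map F u))"
  unfolding nc_eval_def
  by (rule sum.mono_neutral_left) (use assms in \<open>auto simp: in_keys_iff scalar_def\<close>)

lemma nc_eval_zero [simp]: "nc_eval F 0 = 0"
  by (simp add: nc_eval_def)

lemma nc_eval_add: "nc_eval F (x + y) = nc_eval F x + nc_eval F y"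
proof -
  let ?B = "keys x \<union> keys y"
  let ?P = "\<lambda>u. prod_list (map F u)"
  have "nc_eval F (x + y) = (\<Sum>u\<in>?B. scalar (lookup (x + y) u) * ?P u)"
    by (rule nc_eval_superset) (use keys_add[of x y] in auto)
  also have "\<dots> = (\<Sum>u\<in>?B. scalar (lookup x u) * ?P u) + (\<Sum>u\<in>?B. scalar (lookup y u) * ?P u)"
    by (simp add: lookup_add scalar_add distrib_right sum.distrib)
  also have "\<dots> = nc_eval F x + nc_eval F y"
    by (simp add: nc_eval_superset[symmetric])
  finally show ?thesis .
qed

lemma nc_eval_scalar_mult: "nc_eval F (scalar a * x) = scalar a * nc_eval F x"
proof -
  have "nc_eval F (scalar a * x)
      = (\<Sum>u\<in>keys x. scalar (lookup (scalar a * x) u) * prod_list (map F u))"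
    by (rule nc_eval_superset) (use keys_scalar_mult in auto)
  also have "\<dots> = scalar a * nc_eval F x"
    by (simp add: nc_eval_def lookup_scalar_mult scalar_mult sum_distrib_left mult.assoc)
  finally show ?thesis .
qed

lemma nc_eval_uminus: "nc_eval F (- x) = - nc_eval F x"
  using nc_eval_scalar_mult[of F "-1" x] by (simp only: scalar_minus_one)

lemma nc_eval_diff: "nc_eval F (x - y) = nc_eval F x - nc_eval F y"
  by (simp only: diff_conv_add_uminus nc_eval_add nc_eval_uminus)

lemma nc_eval_sum: "nc_eval F (sum f B) = (\<Sum>i\<in>B. nc_eval F (f i))"
  by (induction B rule: infinite_finite_induct) (auto simp: nc_eval_add)

lemma nc_eval_single: "nc_eval F (single u a) = scalar a * prod_list (map F u)"
proof -
  have "nc_eval F (single u a) = (\<Sum>v\<in>{u}. scalar (lookup (single u a) v) * prod_list (map F v))"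
    by (rule nc_eval_superset) auto
  then show ?thesis by simp
qed

lemma nc_eval_gen [simp]: "nc_eval F (single [g] 1) = F g"
  by (simp add: nc_eval_single)

lemma nc_eval_one [simp]: "nc_eval F 1 = 1"
  using nc_eval_single[of F "[]" 1] by simp

lemma nc_eval_mult_single: "nc_eval F (single u a * y) = nc_eval F (single u a) * nc_eval F y"
proof -
  let ?P = "\<lambda>u. prod_list (map F u)"
  have "single u a * y = single u a * (\<Sum>v\<in>keys y. single v (lookup y v))"
    unfolding monomial_expansion[of y, symmetric] ..
  also have "\<dots> = (\<Sum>v\<in>keys y. single (u @ v) (a * lookup y v))"
    by (simp add: sum_distrib_left mult_single)
  finally have "nc_eval F (single u a * y) = (\<Sum>v\<in>keys y. scalar (a * lookup y v) * ?P (u @ v))"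
    by (simp add: nc_eval_sum nc_eval_single)
  also have "\<dots> = (\<Sum>v\<in>keys y. (scalar a * ?P u) * (scalar (lookup y v) * ?P v))"
  proof (rule sum.cong)
    fix v
    have "scalar (a * lookup y v) * ?P (u @ v) = scalar a * (scalar (lookup y v) * ?P u) * ?P v"
      by (simp add: scalar_mult mult.assoc)
    also have "\<dots> = (scalar a * ?P u) * (scalar (lookup y v) * ?P v)"
      by (simp only: scalar_commute[of "lookup y v" "?P u"] mult.assoc)
    finally show "scalar (a * lookup y v) * ?P (u @ v) = (scalar a * ?P u)
        * (scalar (lookup y v) * ?P v)" .
  qed simp
  also have "\<dots> = nc_eval F (single u a) * nc_eval F y"
    by (simp add: nc_eval_def[of F y] nc_eval_single sum_distrib_left)
  finally show ?thesis .
qed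

lemma nc_eval_mult: "nc_eval F (x * y) = nc_eval F x * nc_eval F y"
proof -
  have "nc_eval F (x * y) = nc_eval F ((\<Sum>u\<in>keys x. single u (lookup x u)) * y)"
    unfolding monomial_expansion[of x, symmetric] ..
  also have "\<dots> = (\<Sum>u\<in>keys x. nc_eval F (single u (lookup x u)) * nc_eval F y)"
    by (simp add: sum_distrib_right nc_eval_sum nc_eval_mult_single)
  also have "\<dots> = nc_eval F (\<Sum>u\<in>keys x. single u (lookup x u)) * nc_eval F y"
    by (simp add: nc_eval_sum sum_distrib_right)
  finally show ?thesis by (simp only: monomial_expansion[symmetric])
qed

lemma nc_eval_gens: "nc_eval (\<lambda>g. single [g] 1) x = x"
proof -
  have "nc_eval (\<lambda>g. single [g] 1) x = (\<Sum>u\<in>keys x. single u (lookup x u))"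
    by (simp add: nc_eval_def prod_list_single_gens scalar_mult_single)
  then show ?thesis by (simp add: monomial_expansion[symmetric])
qed

lemma nc_eval_prod_list:
  "nc_eval G (prod_list (map F u)) = prod_list (map (\<lambda>g. nc_eval G (F g)) u)"
  by (induction u) (simp_all add: nc_eval_mult)

lemma nc_eval_nc_eval: "nc_eval G (nc_eval F x) = nc_eval (\<lambda>g. nc_eval G (F g)) x"
proof -
  have "nc_eval G (nc_eval F x)
      = (\<Sum>u\<in>keys x. scalar (lookup x u) * nc_eval G (prod_list (map F u)))"
    unfolding nc_eval_def[of F x] by (simp add: nc_eval_sum nc_eval_scalar_mult)
  then show ?thesis by (simp add: nc_eval_prod_list nc_eval_def[of "\<lambda>g. nc_eval G (F g)" x])
qed

lemma nc_over_nc_eval: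
  assumes "nc_over X x" "\<And>g. g \<in> X \<Longrightarrow> nc_over Y (F g)"
  shows "nc_over Y (nc_eval F x)"
  unfolding nc_eval_def
proof (intro nc_over_sum nc_over_scalar_mult)
  fix u assume "u \<in> keys x"
  then have "u \<noteq> []" "set u \<subseteq> X" using assms(1) by (auto simp: nc_over_def)
  then show "nc_over Y (prod_list (map F u))" using assms(2) by (intro nc_over_prod_list) auto
qed

inductive_set nc_ideal :: "'g set \<Rightarrow> ('g,'k::field) ncpoly set \<Rightarrow> ('g,'k) ncpoly set"
  for X :: "'g set" and R :: "('g,'k) ncpoly set" where
  base: "r \<in> R \<Longrightarrow> r \<in> nc_ideal X R"
| zero: "0 \<in> nc_ideal X R"
| add: "p \<in> nc_ideal X R \<Longrightarrow> q \<in> nc_ideal X R \<Longrightarrow> p + q \<in> nc_ideal X R"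
| smul: "p \<in> nc_ideal X R \<Longrightarrow> scalar a * p \<in> nc_ideal X R"
| lmult: "p \<in> nc_ideal X R \<Longrightarrow> nc_over X a \<Longrightarrow> a * p \<in> nc_ideal X R"
| rmult: "p \<in> nc_ideal X R \<Longrightarrow> nc_over X a \<Longrightarrow> p * a \<in> nc_ideal X R"

lemma nc_ideal_uminus: "p \<in> nc_ideal X R \<Longrightarrow> - p \<in> nc_ideal X R"
  using nc_ideal.smul[of p X R "-1"] by (simp only: scalar_minus_one)

lemma nc_ideal_diff: "p \<in> nc_ideal X R \<Longrightarrow> q \<in> nc_ideal X R \<Longrightarrow> p - q \<in> nc_ideal X R"
  unfolding diff_conv_add_uminus by (intro nc_ideal.add nc_ideal_uminus)

lemma nc_ideal_sum: "(\<And>i. i \<in> B \<Longrightarrow> f i \<in> nc_ideal X R) \<Longrightarrow> sum f B \<in> nc_ideal X R"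
  by (induction B rule: infinite_finite_induct) (auto intro: nc_ideal.zero nc_ideal.add)

lemma nc_eval_nc_ideal:
  assumes "p \<in> nc_ideal X R"
    and "\<And>g. g \<in> X \<Longrightarrow> nc_over Y (F g)" and "\<And>r. r \<in> R \<Longrightarrow> nc_eval F r \<in> nc_ideal Y R'"
  shows "nc_eval F p \<in> nc_ideal Y R'"
  using assms(1)
proof induction
  case (base r) then show ?case using assms by simp
next
  case zero then show ?case by (simp add: nc_ideal.zero)
next
  case (add p q) then show ?case by (simp add: nc_eval_add nc_ideal.add)
next
  case (smul p a) then show ?case by (simp add: nc_eval_scalar_mult nc_ideal.smul)
next
  case (lmult p a) then show ?case using assms
      by (simp add: nc_eval_mult nc_ideal.lmult nc_over_nc_eval)
next
  case (rmult p a) then show ?case using assms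
      by (simp add: nc_eval_mult nc_ideal.rmult nc_over_nc_eval)
qed

definition ideal_cong :: "('g,'k::field) ncpoly set \<Rightarrow> ('g,'k) ncpoly \<Rightarrow> ('g,'k) ncpoly \<Rightarrow> bool" where
  "ideal_cong I x y \<longleftrightarrow> x - y \<in> I"

lemma ideal_cong_refl [intro, simp]: "ideal_cong (nc_ideal X R) x x"
  by (simp add: ideal_cong_def nc_ideal.zero)

lemma ideal_cong_sym: "ideal_cong (nc_ideal X R) x y \<Longrightarrow> ideal_cong (nc_ideal X R) y x"
  unfolding ideal_cong_def using nc_ideal_uminus by fastforce

lemma ideal_cong_trans [trans]:
  "ideal_cong (nc_ideal X R) x y \<Longrightarrow> ideal_cong (nc_ideal X R) y z \<Longrightarrow> ideal_cong (nc_ideal X R) x z"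
  unfolding ideal_cong_def using nc_ideal.add by fastforce

lemma ideal_cong_base: "x - y \<in> R \<Longrightarrow> ideal_cong (nc_ideal X R) x y"
  by (simp add: ideal_cong_def nc_ideal.base)

lemma ideal_cong_add:
  "ideal_cong (nc_ideal X R) x x' \<Longrightarrow> ideal_cong (nc_ideal X R) y y'
   \<Longrightarrow> ideal_cong (nc_ideal X R) (x + y) (x' + y')"
  unfolding ideal_cong_def using nc_ideal.add by (fastforce simp: algebra_simps)

lemma ideal_cong_uminus: "ideal_cong (nc_ideal X R) x x' \<Longrightarrow> ideal_cong (nc_ideal X R) (- x) (- x')"
  unfolding ideal_cong_def using nc_ideal_uminus by fastforce

lemma ideal_cong_diff:
  "ideal_cong (nc_ideal X R) x x' \<Longrightarrow> ideal_cong (nc_ideal X R) y y'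
   \<Longrightarrow> ideal_cong (nc_ideal X R) (x - y) (x' - y')"
  unfolding diff_conv_add_uminus by (intro ideal_cong_add ideal_cong_uminus)

lemma ideal_cong_scalar_mult:
  "ideal_cong (nc_ideal X R) x x' \<Longrightarrow> ideal_cong (nc_ideal X R) (scalar a * x) (scalar a * x')"
  unfolding ideal_cong_def using nc_ideal.smul by (fastforce simp: right_diff_distrib)

lemma ideal_cong_lmult:
  "ideal_cong (nc_ideal X R) x x' \<Longrightarrow> nc_over X a \<Longrightarrow> ideal_cong (nc_ideal X R) (a * x) (a * x')"
  unfolding ideal_cong_def using nc_ideal.lmult by (fastforce simp: right_diff_distrib)

lemma ideal_cong_rmult:
  "ideal_cong (nc_ideal X R) x x' \<Longrightarrow> nc_over X a \<Longrightarrow> ideal_cong (nc_ideal X R) (x * a) (x' * a)"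
  unfolding ideal_cong_def using nc_ideal.rmult by (fastforce simp: left_diff_distrib)

lemma ideal_cong_mult:
  "ideal_cong (nc_ideal X R) x x' \<Longrightarrow> ideal_cong (nc_ideal X R) y y' \<Longrightarrow> nc_over X x'
   \<Longrightarrow> nc_over X y \<Longrightarrow> ideal_cong (nc_ideal X R) (x * y) (x' * y')"
  by (meson ideal_cong_lmult ideal_cong_rmult ideal_cong_trans)

lemma ideal_cong_sum:
  "(\<And>i. i \<in> B \<Longrightarrow> ideal_cong (nc_ideal X R) (f i) (g i))
   \<Longrightarrow> ideal_cong (nc_ideal X R) (sum f B) (sum g B)"
  unfolding ideal_cong_def using nc_ideal_sum[of B "\<lambda>i. f i - g i"] by (simp add: sum_subtractf)

lemma ideal_cong_if_zero:
  "(P \<Longrightarrow> ideal_cong (nc_ideal X R) x y)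
   \<Longrightarrow> ideal_cong (nc_ideal X R) (if P then x else 0) (if P then y else 0)"
  by auto

lemma prod_list_cong:
  assumes "u \<noteq> []" "set u \<subseteq> X"
    and "\<And>g. g \<in> X \<Longrightarrow> ideal_cong (nc_ideal Y R) (F g) (G g)"
    and "\<And>g. g \<in> X \<Longrightarrow> nc_over Y (F g)" "\<And>g. g \<in> X \<Longrightarrow> nc_over Y (G g)"
  shows "ideal_cong (nc_ideal Y R) (prod_list (map F u)) (prod_list (map G u))"
  using assms(1,2)
proof (induction u)
  case (Cons a u)
  show ?case
  proof (cases "u = []")
    case False
    have "ideal_cong (nc_ideal Y R) (F a * prod_list (map F u)) (G a * prod_list (map G u))"
      by (rule ideal_cong_mult) (use Cons False assms in \<open>auto intro!: nc_over_prod_list\<close>)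
    then show ?thesis by simp
  qed (use Cons assms in simp)
qed simp

lemma nc_eval_cong:
  assumes "nc_over X x"
    and "\<And>g. g \<in> X \<Longrightarrow> ideal_cong (nc_ideal Y R) (F g) (G g)"
    and "\<And>g. g \<in> X \<Longrightarrow> nc_over Y (F g)" "\<And>g. g \<in> X \<Longrightarrow> nc_over Y (G g)"
  shows "ideal_cong (nc_ideal Y R) (nc_eval F x) (nc_eval G x)"
  unfolding nc_eval_def
proof (intro ideal_cong_sum ideal_cong_scalar_mult)
  fix u assume "u \<in> keys x"
  then have "u \<noteq> []" "set u \<subseteq> X" using assms(1) by (auto simp: nc_over_def)
  then show "ideal_cong (nc_ideal Y R) (prod_list (map F u)) (prod_list (map G u))"
    using assms by (intro prod_list_cong) auto
qed

section \<open>The involution\<close>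

definition involution :: "('k::field \<Rightarrow> 'k) \<Rightarrow> bool" where
  "involution c \<longleftrightarrow>
     (\<forall>a b. c (a + b) = c a + c b) \<and> (\<forall>a b. c (a * b) = c a * c b) \<and> (\<forall>a. c (c a) = a)"

definition nc_star :: "('k \<Rightarrow> 'k) \<Rightarrow> (('v,'e) gen,'k::field) ncpoly \<Rightarrow> (('v,'e) gen,'k) ncpoly" where
  "nc_star c x = Abs_poly_mapping (\<lambda>w. c (lookup x (rev (map gstar w))))"

lemma gstar_gstar [simp]: "gstar (gstar g) = g"
  by (cases g) auto

lemma gstar_in_gens_iff [simp]: "gstar g \<in> gens G \<longleftrightarrow> g \<in> gens G"
  by (cases g) (auto simp: gens_def)

context
  fixes c :: "'k::field \<Rightarrow> 'k"
  assumes c: "involution c"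
begin

lemma involution_add: "c (a + b) = c a + c b"
  using c by (simp add: involution_def)

lemma involution_mult: "c (a * b) = c a * c b"
  using c by (simp add: involution_def)

lemma involution_inv: "c (c a) = a"
  using c by (simp add: involution_def)

lemma involution_zero: "c 0 = 0"
proof -
  have "c 0 = c 0 + c 0" using involution_add[of 0 0] by simp
  then show ?thesis by (simp only: add_cancel_right_right)
qed

lemma involution_one: "c 1 = 1"
proof -
  have "c 1 = c 1 * c 1" using involution_mult[of 1 1] by simp
  moreover have "c 1 \<noteq> 0" using involution_inv[of 1] involution_zero by auto
  ultimately show ?thesis by (metis mult_cancel_right1)
qed

lemma involution_minus: "c (- a) = - c a"
  using involution_add[of a "- a"] involution_zero by (simp add: eq_neg_iff_add_eq_0 add.commute)

lemma involution_sum: "c (sum f B) = (\<Sum>i\<in>B. c (f i))"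
  by (induction B rule: infinite_finite_induct) (simp_all add: involution_zero involution_add)

lemma lookup_nc_star: "lookup (nc_star c x) w = c (lookup x (rev (map gstar w)))"
proof -
  have "{w. c (lookup x (rev (map gstar w))) \<noteq> 0} \<subseteq> (\<lambda>u. rev (map gstar u)) ` keys x"
  proof
    fix w assume "w \<in> {w. c (lookup x (rev (map gstar w))) \<noteq> 0}"
    then have "rev (map gstar w) \<in> keys x" using involution_zero by (auto simp: in_keys_iff)
    then show "w \<in> (\<lambda>u. rev (map gstar u)) ` keys x"
      by (intro image_eqI[of _ _ "rev (map gstar w)"]) (auto simp: rev_map comp_def)
  qed
  then have "finite {w. c (lookup x (rev (map gstar w))) \<noteq> 0}" by (rule finite_subset) simp
  then show ?thesis by (simp add: nc_star_def)
qed

lemma nc_over_nc_star: "nc_over (gens G) x \<Longrightarrow> nc_over (gens G) (nc_star c x)"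
  unfolding nc_over_def
proof
  fix u assume x: "\<forall>u\<in>keys x. u \<noteq> [] \<and> set u \<subseteq> gens G" and "u \<in> keys (nc_star c x)"
  then have "rev (map gstar u) \<in> keys x"
    using involution_zero by (auto simp: in_keys_iff lookup_nc_star)
  then show "u \<noteq> [] \<and> set u \<subseteq> gens G" using x by fastforce
qed

lemma nc_star_add: "nc_star c (x + y) = nc_star c x + nc_star c y"
  by (rule poly_mapping_eqI) (simp add: lookup_nc_star lookup_add involution_add)

lemma nc_star_uminus: "nc_star c (- x) = - nc_star c x"
  by (rule poly_mapping_eqI) (simp add: lookup_nc_star involution_minus)

lemma nc_star_diff: "nc_star c (x - y) = nc_star c x - nc_star c y"
  by (simp only: diff_conv_add_uminus nc_star_add nc_star_uminus)

lemma nc_star_sum: "nc_star c (sum f B) = (\<Sum>i\<in>B. nc_star c (f i))"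
  by (rule poly_mapping_eqI) (simp add: lookup_nc_star lookup_sum involution_sum)

lemma nc_star_scalar_mult: "nc_star c (scalar a * x) = scalar (c a) * nc_star c x"
  by (rule poly_mapping_eqI) (simp add: lookup_nc_star lookup_scalar_mult involution_mult)

lemma nc_star_single: "nc_star c (single u a) = single (rev (map gstar u)) (c a)"
proof (rule poly_mapping_eqI)
  fix w
  have "u = rev (map gstar w) \<longleftrightarrow> rev (map gstar u) = w" by (auto simp: rev_map comp_def)
  then show "lookup (nc_star c (single u a)) w = lookup (single (rev (map gstar u)) (c a)) w"
    by (auto simp: lookup_nc_star lookup_single when_def involution_zero)
qed

lemma nc_star_nc_star: "nc_star c (nc_star c x) = x"
  by (rule poly_mapping_eqI) (simp add: lookup_nc_star involution_inv rev_map comp_def)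

lemma nc_star_one: "nc_star c 1 = 1"
  using nc_star_single[of "[]" 1] by (simp add: involution_one)

lemma nc_star_gen: "nc_star c (single [g] 1) = single [gstar g] 1"
  using nc_star_single[of "[g]" 1] by (simp add: involution_one)

lemma nc_star_mult:
  fixes x y :: "(('v,'e) gen,'k) ncpoly"
  shows "nc_star c (x * y) = nc_star c y * nc_star c x"
proof (rule poly_mapping_eqI)
  fix w :: "('v,'e) gen list"
  let ?w = "rev (map gstar w)" and ?n = "length w"
  have "lookup (nc_star c (x * y)) w
      = (\<Sum>i\<le>?n. c (lookup x (take i ?w)) * c (lookup y (drop i ?w)))"
    by (simp add: lookup_nc_star lookup_mult_words involution_sum involution_mult)
  also have "\<dots> = (\<Sum>j\<le>?n. c (lookup x (take (?n - j) ?w)) * c (lookup y (drop (?n - j) ?w)))"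
    by (rule sum.reindex_bij_witness[where i="\<lambda>i. ?n - i" and j="\<lambda>i. ?n - i"]) auto
  also have "\<dots> = (\<Sum>j\<le>?n. lookup (nc_star c y) (take j w) * lookup (nc_star c x) (drop j w))"
  proof (rule sum.cong)
    fix j assume "j \<in> {..?n}"
    then have "take (?n - j) ?w = rev (map gstar (drop j w))"
      "drop (?n - j) ?w = rev (map gstar (take j w))"
      by (simp_all add: take_rev drop_rev drop_map take_map)
    then show "c (lookup x (take (?n - j) ?w)) * c (lookup y (drop (?n - j) ?w)) =
        lookup (nc_star c y) (take j w) * lookup (nc_star c x) (drop j w)"
      by (simp add: lookup_nc_star mult.commute)
  qed simp
  also have "\<dots> = lookup (nc_star c y * nc_star c x) w"
    by (simp add: lookup_mult_words)
  finally show "lookup (nc_star c (x * y)) w = lookup (nc_star c y * nc_star c x) w" .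
qed

lemma nc_star_prod_list:
  "nc_star c (prod_list (map F u)) = prod_list (rev (map (\<lambda>g. nc_star c (F g)) u))"
  by (induction u) (simp_all add: nc_star_one nc_star_mult)

lemma nc_eval_nc_star:
  assumes "\<And>g. F (gstar g) = nc_star c (F g)"
  shows "nc_eval F (nc_star c x) = nc_star c (nc_eval F x)"
proof -
  have "nc_eval F (nc_star c x) = nc_eval F (nc_star c (\<Sum>u\<in>keys x. single u (lookup x u)))"
    unfolding monomial_expansion[of x, symmetric] ..
  also have "\<dots> = (\<Sum>u\<in>keys x. scalar (c (lookup x u)) * prod_list (map F (rev (map gstar u))))"
    by (simp add: nc_star_sum nc_star_single nc_eval_sum nc_eval_single)
  also have "\<dots> = (\<Sum>u\<in>keys x. scalar (c (lookup x u)) * nc_star c (prod_list (map F u)))"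
    by (simp add: nc_star_prod_list rev_map comp_def assms)
  also have "\<dots> = nc_star c (nc_eval F x)"
    by (simp add: nc_eval_def nc_star_sum nc_star_scalar_mult)
  finally show ?thesis .
qed

end

lemma fa_mult_lookup: "fa_mult (lookup x) (lookup y) = lookup (x * y :: ('g,'k::field) ncpoly)"
  by (rule ext) (simp add: fa_mult_def lookup_mult_words)

lemma fa_add_lookup: "fa_add (lookup x) (lookup y) = lookup (x + y)"
  by (rule ext) (simp add: fa_add_def lookup_add)

lemma fa_diff_lookup: "fa_diff (lookup x) (lookup y) = lookup (x - y)"
  by (rule ext) (simp add: fa_diff_def lookup_minus)

lemma fa_smul_lookup: "fa_smul a (lookup x) = lookup (scalar a * x)"
  by (rule ext) (simp add: fa_smul_def lookup_scalar_mult)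

lemma fa_zero_lookup: "fa_zero = lookup 0"
  by (rule ext) (simp add: fa_zero_def)

lemma ghat_lookup: "ghat g = lookup (single [g] 1)"
  by (rule ext) (simp add: ghat_def fa_gen_def lookup_single when_def)

lemma fa_sum_lookup: "fa_sum B (\<lambda>i. lookup (f i)) = lookup (sum f B)"
  by (rule ext) (simp add: fa_sum_def lookup_sum)

lemma fa_listprod_lookup:
  fixes F :: "'a \<Rightarrow> ('g,'k::field) ncpoly"
  shows "u \<noteq> [] \<Longrightarrow> fa_listprod (map (\<lambda>g. lookup (F g)) u) = lookup (prod_list (map F u))"
proof (induction u)
  case (Cons a u)
  then show ?case by (cases u) (simp_all add: fa_mult_lookup)
qed simp

lemma fa_eval_lookup:
  assumes "[] \<notin> keys x"
  shows "fa_eval (\<lambda>g. lookup (F g)) (lookup x) = lookup (nc_eval F x)"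
proof (rule ext)
  fix w
  have keys: "{u. lookup x u \<noteq> 0} = keys x" by (auto simp: in_keys_iff)
  have "fa_eval (\<lambda>g. lookup (F g)) (lookup x) w
      = (\<Sum>u\<in>keys x. lookup x u * lookup (prod_list (map F u)) w)"
    unfolding fa_eval_def keys
  proof (rule sum.cong)
    fix u assume "u \<in> keys x"
    then have "u \<noteq> []" using assms by auto
    then show "lookup x u * fa_listprod (map (\<lambda>g. lookup (F g)) u) w
        = lookup x u * lookup (prod_list (map F u)) w"
      by (simp add: fa_listprod_lookup)
  qed simp
  also have "\<dots> = lookup (nc_eval F x) w"
    by (simp add: nc_eval_def lookup_sum lookup_scalar_mult)
  finally show "fa_eval (\<lambda>g. lookup (F g)) (lookup x) w = lookup (nc_eval F x) w" .
qed

lemma fa_star_lookup: "involution c \<Longrightarrow> fa_star c (lookup x) = lookup (nc_star c x)"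
  by (rule ext) (simp add: fa_star_def lookup_nc_star)

lemma fa_carrier_lookup: "lookup x \<in> fa_carrier X \<longleftrightarrow> nc_over X x"
  by (auto simp: fa_carrier_def nc_over_def in_keys_iff)

lemma fa_carrier_obtain:
  assumes "p \<in> fa_carrier X"
  obtains x where "p = lookup x" "nc_over X x"
proof -
  have "p = lookup (Abs_poly_mapping p)" using assms by (simp add: fa_carrier_def)
  with assms show ?thesis using that fa_carrier_lookup by metis
qed

lemma lookup_in_image_iff: "lookup x \<in> lookup ` A \<longleftrightarrow> x \<in> A"
  by (auto simp: poly_mapping.lookup_inject)

lemma fa_ideal_subset_lookup: "fa_ideal X (lookup ` R) \<subseteq> lookup ` nc_ideal X R"
proof
  fix p assume "p \<in> fa_ideal X (lookup ` R)"
  then show "p \<in> lookup ` nc_ideal X R"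
  proof induction
    case (base r)
    then show ?case using nc_ideal.base by blast
  next
    case zero
    show ?case unfolding fa_zero_lookup by (intro imageI nc_ideal.zero)
  next
    case (add p q)
    then obtain x y where "x \<in> nc_ideal X R" "y \<in> nc_ideal X R" "p = lookup x" "q = lookup y"
      by blast
    then show ?case by (simp add: fa_add_lookup lookup_in_image_iff nc_ideal.add)
  next
    case (smul p a)
    then obtain x where "x \<in> nc_ideal X R" "p = lookup x" by blast
    then show ?case by (simp add: fa_smul_lookup lookup_in_image_iff nc_ideal.smul)
  next
    case (lmult p a)
    then obtain x where "x \<in> nc_ideal X R" "p = lookup x" by blast
    moreover obtain a' where "a = lookup a'" "nc_over X a'" using lmult(2)
        by (rule fa_carrier_obtain)
    ultimately show ?case by (simp add: fa_mult_lookup lookup_in_image_iff nc_ideal.lmult)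
  next
    case (rmult p a)
    then obtain x where "x \<in> nc_ideal X R" "p = lookup x" by blast
    moreover obtain a' where "a = lookup a'" "nc_over X a'" using rmult(2)
        by (rule fa_carrier_obtain)
    ultimately show ?case by (simp add: fa_mult_lookup lookup_in_image_iff nc_ideal.rmult)
  qed
qed

lemma lookup_nc_ideal_subset: "lookup ` nc_ideal X R \<subseteq> fa_ideal X (lookup ` R)"
proof clarify
  fix x assume "x \<in> nc_ideal X R"
  then show "lookup x \<in> fa_ideal X (lookup ` R)"
  proof induction
    case zero
    then show ?case using fa_ideal.zero unfolding fa_zero_lookup .
  next
    case (add p q)
    then show ?case using fa_ideal.add[of "lookup p" X _ "lookup q"] by (simp add: fa_add_lookup)
  next
    case (smul p a)
    then show ?case using fa_ideal.smul[of "lookup p" X _ a] by (simp add: fa_smul_lookup)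
  next
    case (lmult p a)
    then show ?case
      using fa_ideal.lmult[of "lookup p" X _ "lookup a"]
          by (simp add: fa_carrier_lookup fa_mult_lookup)
  next
    case (rmult p a)
    then show ?case
      using fa_ideal.rmult[of "lookup p" X _ "lookup a"]
          by (simp add: fa_carrier_lookup fa_mult_lookup)
  qed (simp add: fa_ideal.base)
qed

lemma fa_ideal_lookup: "fa_ideal X (lookup ` R) = lookup ` nc_ideal X R"
  using fa_ideal_subset_lookup lookup_nc_ideal_subset by (rule subset_antisym)

lemma ideal_cong_iff_fa_diff:
  "ideal_cong I x y \<longleftrightarrow> fa_diff (lookup x) (lookup y) \<in> lookup ` I"
  by (simp add: ideal_cong_def fa_diff_lookup lookup_in_image_iff)

lemma fa_diff_self_in_ideal: "fa_diff p p \<in> lookup ` nc_ideal X R"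
proof -
  have "fa_diff p p = lookup 0" by (simp add: fa_diff_def fun_eq_iff)
  then show ?thesis using nc_ideal.zero by blast
qed

lemma nc_eval_inverse_cong:
  assumes F_over: "\<And>g. g \<in> X \<Longrightarrow> nc_over Y (F g)" and G_over: "\<And>h. h \<in> Y \<Longrightarrow> nc_over Z (G h)"
    and G_F: "\<And>g. g \<in> X \<Longrightarrow> ideal_cong (nc_ideal Z R) (nc_eval G (F g)) (single [g] 1)"
    and x: "nc_over X x" and XZ: "X \<subseteq> Z"
  shows "ideal_cong (nc_ideal Z R) (nc_eval G (nc_eval F x)) x"
proof -
  have "ideal_cong (nc_ideal Z R) (nc_eval (\<lambda>g. nc_eval G (F g)) x) (nc_eval (\<lambda>g. single [g] 1) x)"
    by (rule nc_eval_cong) (use x G_F XZ in \<open>auto intro: nc_over_nc_eval G_over F_over\<close>)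
  then show ?thesis by (simp add: nc_eval_nc_eval nc_eval_gens)
qed

context
  fixes F :: "'g \<Rightarrow> ('h,'k::field) ncpoly" and X :: "'g set" and Y :: "'h set"
  assumes F_over: "\<And>g. g \<in> X \<Longrightarrow> nc_over Y (F g)"
begin

lemma nc_over_nc_eval_gens: "nc_over X x \<Longrightarrow> nc_over Y (nc_eval F x)"
  by (rule nc_over_nc_eval) (use F_over in auto)

lemma fa_eval_lookup_over:
  "nc_over X (x :: ('g,'k) ncpoly) \<Longrightarrow> fa_eval (\<lambda>g. lookup (F g)) (lookup x) = lookup (nc_eval F x)"
  by (rule fa_eval_lookup[OF nil_notin_keys])

lemma fa_eval_ghat:
  "g \<in> X \<Longrightarrow> fa_diff (fa_eval (\<lambda>g. lookup (F g)) (ghat g)) (lookup (F g)) \<in> lookup ` nc_ideal Y R"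
  by (simp add: ghat_lookup fa_eval_lookup_over nc_over_single fa_diff_self_in_ideal)

lemma hom_mod_fa_eval:
  assumes F_rels: "\<And>r. r \<in> R \<Longrightarrow> nc_eval F r \<in> nc_ideal Y R'"
  shows "hom_mod X (lookup ` nc_ideal X R) Y (lookup ` nc_ideal Y R') (fa_eval (\<lambda>g. lookup (F g)))"
proof -
  let ?\<Phi> = "fa_eval (\<lambda>g. lookup (F g))"
  have carrier: "?\<Phi> p \<in> fa_carrier Y" if "p \<in> fa_carrier X" for p
    using that by (elim fa_carrier_obtain) (simp add: fa_eval_lookup_over fa_carrier_lookup
        nc_over_nc_eval_gens)
  have ideal: "fa_diff (?\<Phi> p) (?\<Phi> q) \<in> lookup ` nc_ideal Y R'"
    if p: "p \<in> fa_carrier X" and q: "q \<in> fa_carrier X"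
      and pq: "fa_diff p q \<in> lookup ` nc_ideal X R" for p q
  proof -
    obtain x y where xy: "p = lookup x" "nc_over X x" "q = lookup y" "nc_over X y"
      using p q by (elim fa_carrier_obtain)
    have "x - y \<in> nc_ideal X R" using pq xy by (simp add: fa_diff_lookup lookup_in_image_iff)
    then have "nc_eval F (x - y) \<in> nc_ideal Y R'"
      by (rule nc_eval_nc_ideal) (use F_over F_rels in auto)
    with xy show ?thesis
      by (simp add: fa_eval_lookup_over fa_diff_lookup nc_eval_diff lookup_in_image_iff)
  qed
  have add: "fa_diff (?\<Phi> (fa_add p q)) (fa_add (?\<Phi> p) (?\<Phi> q)) \<in> lookup ` nc_ideal Y R'"
    if "p \<in> fa_carrier X" "q \<in> fa_carrier X" for p q
    using that by (elim fa_carrier_obtain)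
      (simp add: fa_add_lookup fa_eval_lookup_over nc_over_add nc_eval_add fa_diff_self_in_ideal)
  have smul: "fa_diff (?\<Phi> (fa_smul a p)) (fa_smul a (?\<Phi> p)) \<in> lookup ` nc_ideal Y R'"
    if "p \<in> fa_carrier X" for a p
    using that by (elim fa_carrier_obtain)
      (simp add: fa_smul_lookup fa_eval_lookup_over nc_over_scalar_mult nc_eval_scalar_mult
          fa_diff_self_in_ideal)
  have mult: "fa_diff (?\<Phi> (fa_mult p q)) (fa_mult (?\<Phi> p) (?\<Phi> q)) \<in> lookup ` nc_ideal Y R'"
    if "p \<in> fa_carrier X" "q \<in> fa_carrier X" for p q
    using that by (elim fa_carrier_obtain)
      (simp add: fa_mult_lookup fa_eval_lookup_over nc_over_mult nc_eval_mult fa_diff_self_in_ideal)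
  show ?thesis unfolding hom_mod_def using carrier ideal add smul mult by blast
qed

lemma fa_eval_inj_mod:
  assumes G_over: "\<And>h. h \<in> Y \<Longrightarrow> nc_over X (G h)"
    and G_rels: "\<And>r. r \<in> R' \<Longrightarrow> nc_eval G r \<in> nc_ideal X R"
    and G_F: "\<And>g. g \<in> X \<Longrightarrow> ideal_cong (nc_ideal X R) (nc_eval G (F g)) (single [g] 1)"
    and p: "p \<in> fa_carrier X" "fa_eval (\<lambda>g. lookup (F g)) p \<in> lookup ` nc_ideal Y R'"
  shows "p \<in> lookup ` nc_ideal X R"
proof -
  obtain x where x: "p = lookup x" "nc_over X x" using p(1) by (rule fa_carrier_obtain)
  have "nc_eval F x \<in> nc_ideal Y R'"
    using p(2) x by (simp add: fa_eval_lookup_over lookup_in_image_iff)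
  then have "nc_eval G (nc_eval F x) \<in> nc_ideal X R"
    by (rule nc_eval_nc_ideal) (use G_over G_rels in auto)
  moreover have "nc_eval G (nc_eval F x) - x \<in> nc_ideal X R"
    using nc_eval_inverse_cong[of X Y F X G R x] F_over G_over G_F x(2)
        by (simp add: ideal_cong_def)
  ultimately have "x \<in> nc_ideal X R"
    using nc_ideal_diff by fastforce
  then show ?thesis using x by simp
qed

lemma fa_eval_surj_mod:
  assumes G_over: "\<And>h. h \<in> Y \<Longrightarrow> nc_over X (G h)"
    and F_G: "\<And>h. h \<in> Y \<Longrightarrow> ideal_cong (nc_ideal Y R) (nc_eval F (G h)) (single [h] 1)"
    and q: "q \<in> fa_carrier Y"
  shows "\<exists>p\<in>fa_carrier X. fa_diff (fa_eval (\<lambda>g. lookup (F g)) p) q \<in> lookup ` nc_ideal Y R"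
proof -
  obtain y where y: "q = lookup y" "nc_over Y y" using q by (rule fa_carrier_obtain)
  have Gy: "nc_over X (nc_eval G y)" by (rule nc_over_nc_eval) (use y G_over in auto)
  have "ideal_cong (nc_ideal Y R) (nc_eval F (nc_eval G y)) y"
    using nc_eval_inverse_cong[of Y X G Y F R y] F_over G_over F_G y(2) by simp
  then have "fa_diff (fa_eval (\<lambda>g. lookup (F g)) (lookup (nc_eval G y))) q \<in> lookup ` nc_ideal Y R"
    using y Gy by (simp add: fa_eval_lookup_over ideal_cong_iff_fa_diff)
  moreover have "lookup (nc_eval G y) \<in> fa_carrier X" using Gy by (simp add: fa_carrier_lookup)
  ultimately show ?thesis by blast
qed

end

lemma fa_eval_fa_star:
  assumes c: "involution c" and p: "p \<in> fa_carrier (gens G)"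
    and F_star: "\<And>g. F (gstar g) = nc_star c (F g)"
  shows "fa_eval (\<lambda>g. lookup (F g)) (fa_star c p) = fa_star c (fa_eval (\<lambda>g. lookup (F g)) p)"
proof -
  obtain x where x: "p = lookup x" "nc_over (gens G) x" using p by (rule fa_carrier_obtain)
  have "[] \<notin> keys (nc_star c x)" by (rule nil_notin_keys[OF nc_over_nc_star[OF c x(2)]])
  then show ?thesis
    using x by (simp add: fa_star_lookup[OF c] fa_eval_lookup nil_notin_keys
        nc_eval_nc_star[OF c, where F=F, OF F_star])
qed

definition hom_lift :: "(('g,'k) fa \<Rightarrow> ('h,'k) fa) \<Rightarrow> ('g,'k::field) ncpoly \<Rightarrow> ('h,'k) ncpoly" where
  "hom_lift \<Psi> x = Abs_poly_mapping (\<Psi> (lookup x))"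

context
  fixes \<Psi> :: "('g,'k::field) fa \<Rightarrow> ('h,'k) fa" and X I Y R
  assumes hom: "hom_mod X I Y (lookup ` nc_ideal Y R) \<Psi>"
begin

lemma lookup_hom_lift: "nc_over X x \<Longrightarrow> lookup (hom_lift \<Psi> x) = \<Psi> (lookup x)"
proof -
  assume "nc_over X x"
  then have "\<Psi> (lookup x) \<in> fa_carrier Y"
    using hom unfolding hom_mod_def fa_carrier_lookup[symmetric] by blast
  then show ?thesis by (simp add: hom_lift_def fa_carrier_def)
qed

lemma nc_over_hom_lift: "nc_over X x \<Longrightarrow> nc_over Y (hom_lift \<Psi> x)"
proof -
  assume x: "nc_over X x"
  then have "\<Psi> (lookup x) \<in> fa_carrier Y"
    using hom unfolding hom_mod_def fa_carrier_lookup[symmetric] by blast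
  then show ?thesis by (simp add: lookup_hom_lift[OF x, symmetric] fa_carrier_lookup)
qed

lemma hom_lift_add:
  assumes "nc_over X x" "nc_over X y"
  shows "ideal_cong (nc_ideal Y R) (hom_lift \<Psi> (x + y)) (hom_lift \<Psi> x + hom_lift \<Psi> y)"
proof -
  have "fa_diff (\<Psi> (fa_add (lookup x) (lookup y))) (fa_add (\<Psi> (lookup x)) (\<Psi> (lookup y)))
      \<in> lookup ` nc_ideal Y R"
    using hom assms unfolding hom_mod_def fa_carrier_lookup[symmetric] by blast
  then show ?thesis
    using assms by (simp add: ideal_cong_iff_fa_diff lookup_hom_lift nc_over_add
        fa_add_lookup[symmetric])
qed

lemma hom_lift_scalar_mult:
  assumes "nc_over X x"
  shows "ideal_cong (nc_ideal Y R) (hom_lift \<Psi> (scalar a * x)) (scalar a * hom_lift \<Psi> x)"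
proof -
  have "fa_diff (\<Psi> (fa_smul a (lookup x))) (fa_smul a (\<Psi> (lookup x))) \<in> lookup ` nc_ideal Y R"
    using hom assms unfolding hom_mod_def fa_carrier_lookup[symmetric] by blast
  then show ?thesis
    using assms by (simp add: ideal_cong_iff_fa_diff lookup_hom_lift nc_over_scalar_mult
        fa_smul_lookup[symmetric])
qed

lemma hom_lift_mult:
  assumes "nc_over X x" "nc_over X y"
  shows "ideal_cong (nc_ideal Y R) (hom_lift \<Psi> (x * y)) (hom_lift \<Psi> x * hom_lift \<Psi> y)"
proof -
  have "fa_diff (\<Psi> (fa_mult (lookup x) (lookup y))) (fa_mult (\<Psi> (lookup x)) (\<Psi> (lookup y)))
      \<in> lookup ` nc_ideal Y R"
    using hom assms unfolding hom_mod_def fa_carrier_lookup[symmetric] by blast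
  then show ?thesis
    using assms by (simp add: ideal_cong_iff_fa_diff lookup_hom_lift nc_over_mult
        fa_mult_lookup[symmetric])
qed

lemma hom_lift_sum:
  assumes "finite A" "\<And>u. u \<in> A \<Longrightarrow> nc_over X (f u)"
  shows "ideal_cong (nc_ideal Y R) (hom_lift \<Psi> (sum f A)) (\<Sum>u\<in>A. hom_lift \<Psi> (f u))"
  using assms
proof (induction A rule: finite_induct)
  case empty
  show ?case using hom_lift_scalar_mult[of 0 0] by simp
next
  case (insert a A)
  have "ideal_cong (nc_ideal Y R) (hom_lift \<Psi> (f a + sum f A))
      (hom_lift \<Psi> (f a) + hom_lift \<Psi> (sum f A))"
    using insert by (intro hom_lift_add) auto
  also have "ideal_cong (nc_ideal Y R) \<dots> (hom_lift \<Psi> (f a) + (\<Sum>u\<in>A. hom_lift \<Psi> (f u)))"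
    using insert by (intro ideal_cong_add ideal_cong_refl) auto
  finally show ?case using insert by simp
qed

context
  fixes F :: "'g \<Rightarrow> ('h,'k) ncpoly"
  assumes F_over: "\<And>g. g \<in> X \<Longrightarrow> nc_over Y (F g)"
    and hom_lift_gen: "\<And>g. g \<in> X \<Longrightarrow> ideal_cong (nc_ideal Y R) (hom_lift \<Psi> (single [g] 1)) (F g)"
begin

lemma hom_lift_word:
  "u \<noteq> [] \<Longrightarrow> set u \<subseteq> X \<Longrightarrow> ideal_cong (nc_ideal Y R) (hom_lift \<Psi> (single u 1)) (prod_list (map F u))"
proof (induction u)
  case (Cons g u)
  show ?case
  proof (cases "u = []")
    case False
    have u: "nc_over X (single u 1)" using Cons False by (simp add: nc_over_def)
    have "single (g # u) 1 = single [g] 1 * single u (1::'k)" by (simp add: mult_single)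
    then have "ideal_cong (nc_ideal Y R) (hom_lift \<Psi> (single (g # u) 1))
        (hom_lift \<Psi> (single [g] 1) * hom_lift \<Psi> (single u 1))"
      using Cons u by (simp only:) (intro hom_lift_mult nc_over_single, auto)
    also have "ideal_cong (nc_ideal Y R) \<dots> (F g * prod_list (map F u))"
      using Cons False u by (intro ideal_cong_mult hom_lift_gen F_over nc_over_hom_lift) auto
    finally show ?thesis by simp
  qed (use Cons hom_lift_gen in simp)
qed simp

lemma hom_lift_nc_eval:
  assumes x: "nc_over X x"
  shows "ideal_cong (nc_ideal Y R) (hom_lift \<Psi> x) (nc_eval F x)"
proof -
  have monomial: "nc_over X (scalar (lookup x u) * single u 1)" if "u \<in> keys x" for u
    using x that by (intro nc_over_scalar_mult) (simp add: nc_over_def)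
  have expansion: "x = (\<Sum>u\<in>keys x. scalar (lookup x u) * single u 1)"
    by (subst monomial_expansion) (simp add: scalar_mult_single)
  moreover have "ideal_cong (nc_ideal Y R)
      (hom_lift \<Psi> (\<Sum>u\<in>keys x. scalar (lookup x u) * single u 1))
      (\<Sum>u\<in>keys x. hom_lift \<Psi> (scalar (lookup x u) * single u 1))"
    using monomial by (simp add: hom_lift_sum)
  ultimately have "ideal_cong (nc_ideal Y R) (hom_lift \<Psi> x)
      (\<Sum>u\<in>keys x. hom_lift \<Psi> (scalar (lookup x u) * single u 1))"
    by (simp only:)
  also have "ideal_cong (nc_ideal Y R) \<dots> (\<Sum>u\<in>keys x. scalar (lookup x u) * prod_list (map F u))"
  proof (rule ideal_cong_sum)
    fix u assume u: "u \<in> keys x"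
    then have "u \<noteq> []" "set u \<subseteq> X" "nc_over X (single u 1)" using x by (auto simp: nc_over_def)
    then show "ideal_cong (nc_ideal Y R) (hom_lift \<Psi> (scalar (lookup x u) * single u 1))
        (scalar (lookup x u) * prod_list (map F u))"
      by (intro ideal_cong_trans[OF hom_lift_scalar_mult ideal_cong_scalar_mult] hom_lift_word)
  qed
  finally show ?thesis by (simp add: nc_eval_def)
qed

end

end

lemma hom_mod_unique:
  assumes hom: "hom_mod X I Y (lookup ` nc_ideal Y R) \<Psi>"
    and gen: "\<forall>g\<in>X. fa_diff (\<Psi> (ghat g)) (lookup (F g)) \<in> lookup ` nc_ideal Y R"
    and F_over: "\<And>g. g \<in> X \<Longrightarrow> nc_over Y (F g)"
    and p: "p \<in> fa_carrier X"
  shows "fa_diff (\<Psi> p) (fa_eval (\<lambda>g. lookup (F g)) p) \<in> lookup ` nc_ideal Y R"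
proof -
  obtain x where x: "p = lookup x" "nc_over X x" using p by (rule fa_carrier_obtain)
  have "ideal_cong (nc_ideal Y R) (hom_lift \<Psi> (single [g] 1)) (F g)" if "g \<in> X" for g
    using gen that by (simp add: ideal_cong_iff_fa_diff lookup_hom_lift[OF hom] ghat_lookup
        nc_over_single)
  then have "ideal_cong (nc_ideal Y R) (hom_lift \<Psi> x) (nc_eval F x)"
    using hom_lift_nc_eval[of X I Y R \<Psi> F x] hom F_over x(2) by blast
  then show ?thesis
    using x by (simp add: ideal_cong_iff_fa_diff lookup_hom_lift[OF hom] fa_eval_lookup
        nil_notin_keys)
qed

lemma fa_eval_iso:
  fixes F :: "'g \<Rightarrow> ('h,'k::field) ncpoly" and G :: "'h \<Rightarrow> ('g,'k) ncpoly"
  assumes F_over: "\<And>g. g \<in> X \<Longrightarrow> nc_over Y (F g)" and G_over: "\<And>h. h \<in> Y \<Longrightarrow> nc_over X (G h)"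
    and F_rels: "\<And>r. r \<in> R \<Longrightarrow> nc_eval F r \<in> nc_ideal Y R'"
    and G_rels: "\<And>r. r \<in> R' \<Longrightarrow> nc_eval G r \<in> nc_ideal X R"
    and G_F: "\<And>g. g \<in> X \<Longrightarrow> ideal_cong (nc_ideal X R) (nc_eval G (F g)) (single [g] 1)"
    and F_G: "\<And>h. h \<in> Y \<Longrightarrow> ideal_cong (nc_ideal Y R') (nc_eval F (G h)) (single [h] 1)"
  defines "I \<equiv> lookup ` nc_ideal X R" and "J \<equiv> lookup ` nc_ideal Y R'"
    and "\<Phi> \<equiv> fa_eval (\<lambda>g. lookup (F g))"
  shows "hom_mod X I Y J \<Phi>
    \<and> (\<forall>g\<in>X. fa_diff (\<Phi> (ghat g)) (lookup (F g)) \<in> J)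
    \<and> (\<forall>p\<in>fa_carrier X. \<Phi> p \<in> J \<longrightarrow> p \<in> I)
    \<and> (\<forall>q\<in>fa_carrier Y. \<exists>p\<in>fa_carrier X. fa_diff (\<Phi> p) q \<in> J)
    \<and> (\<forall>\<Psi>. hom_mod X I Y J \<Psi> \<and> (\<forall>g\<in>X. fa_diff (\<Psi> (ghat g)) (lookup (F g)) \<in> J)
          \<longrightarrow> (\<forall>p\<in>fa_carrier X. fa_diff (\<Psi> p) (\<Phi> p) \<in> J))"
  unfolding I_def J_def \<Phi>_def
proof (intro conjI ballI allI impI)
  show "hom_mod X (lookup ` nc_ideal X R) Y (lookup ` nc_ideal Y R') (fa_eval (\<lambda>g. lookup (F g)))"
    by (rule hom_mod_fa_eval) (use F_over F_rels in auto)
next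
  fix g assume "g \<in> X"
  then show "fa_diff (fa_eval (\<lambda>g. lookup (F g)) (ghat g)) (lookup (F g)) \<in> lookup ` nc_ideal Y R'"
    by (rule fa_eval_ghat[rotated]) (rule F_over)
next
  fix p :: "('g,'k) fa"
  assume "p \<in> fa_carrier X" "fa_eval (\<lambda>g. lookup (F g)) p \<in> lookup ` nc_ideal Y R'"
  then show "p \<in> lookup ` nc_ideal X R"
    by (intro fa_eval_inj_mod[where G=G]) (use F_over G_over G_rels G_F in auto)
next
  fix q :: "('h,'k) fa" assume "q \<in> fa_carrier Y"
  then show "\<exists>p\<in>fa_carrier X. fa_diff (fa_eval (\<lambda>g. lookup (F g)) p) q \<in> lookup ` nc_ideal Y R'"
    by (intro fa_eval_surj_mod[where G=G]) (use F_over G_over F_G in auto)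
next
  fix \<Psi> and p :: "('g,'k) fa"
  assume "hom_mod X (lookup ` nc_ideal X R) Y (lookup ` nc_ideal Y R') \<Psi>
      \<and> (\<forall>g\<in>X. fa_diff (\<Psi> (ghat g)) (lookup (F g)) \<in> lookup ` nc_ideal Y R')"
    and "p \<in> fa_carrier X"
  then show "fa_diff (\<Psi> p) (fa_eval (\<lambda>g. lookup (F g)) p) \<in> lookup ` nc_ideal Y R'"
    using hom_mod_unique[where F=F] F_over by blast
qed

section \<open>The Cohn-Leavitt relations\<close>

definition vtx :: "'v \<Rightarrow> (('v,'e) gen,'k::field) ncpoly" where "vtx v = single [GV v] 1"
definition edg :: "'e \<Rightarrow> (('v,'e) gen,'k::field) ncpoly" where "edg e = single [GE e] 1"
definition ghost :: "'e \<Rightarrow> (('v,'e) gen,'k::field) ncpoly" where "ghost e = single [GG e] 1"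

definition edge_sum :: "('v,'e) graph \<Rightarrow> 'v \<Rightarrow> (('v,'e) gen,'k::field) ncpoly" where
  "edge_sum G v = (\<Sum>e\<in>out_edges G v. edg e * ghost e)"

definition CL_rels_nc :: "('v,'e) graph \<Rightarrow> 'v set \<Rightarrow> (('v,'e) gen,'k::field) ncpoly set" where
  "CL_rels_nc G S =
     {vtx v * vtx w - (if v = w then vtx v else 0) | v w. v \<in> verts G \<and> w \<in> verts G}
   \<union> {vtx (src G e) * edg e - edg e | e. e \<in> edges G}
   \<union> {edg e * vtx (rng G e) - edg e | e. e \<in> edges G}
   \<union> {vtx (rng G e) * ghost e - ghost e | e. e \<in> edges G}
   \<union> {ghost e * vtx (src G e) - ghost e | e. e \<in> edges G}
   \<union> {ghost e * edg f - (if e = f then vtx (rng G e) else 0) | e f. e \<in> edges G \<and> f \<in> edges G}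
   \<union> {vtx v - edge_sum G v | v. v \<in> S}"

lemma if_lookup: "(if P then lookup a else lookup b) = lookup (if P then a else b)"
  by simp

lemma Psum_lookup: "Psum G v = lookup (edge_sum G v)"
  unfolding Psum_def edge_sum_def ghat_lookup fa_mult_lookup edg_def ghost_def fa_sum_lookup ..

lemma CL_rels_lookup: "CL_rels G S = lookup `
    (CL_rels_nc G S :: (('v,'e) gen,'k::field) ncpoly set)"
proof -
  have image1: "{lookup (f v) | v. P v} = lookup ` {f v | v. P v}"
    for f :: "'a \<Rightarrow> (('v,'e) gen,'k) ncpoly" and P
    by blast
  have image2: "{lookup (f v w) | v w. Q v w} = lookup ` {f v w | v w. Q v w}"
    for f :: "'a \<Rightarrow> 'b \<Rightarrow> (('v,'e) gen,'k) ncpoly" and Q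
    by blast
  show ?thesis
    unfolding CL_rels_def CL_rels_nc_def image_Un ghat_lookup fa_mult_lookup fa_zero_lookup if_lookup
      fa_diff_lookup fa_sum_lookup vtx_def[symmetric] edg_def[symmetric] ghost_def[symmetric]
      edge_sum_def[symmetric]
    by (simp only: image1 image2)
qed

abbreviation CL_ideal_nc :: "('v,'e) graph \<Rightarrow> 'v set \<Rightarrow> (('v,'e) gen,'k::field) ncpoly set" where
  "CL_ideal_nc G S \<equiv> nc_ideal (gens G) (CL_rels_nc G S)"

lemma CL_ideal_lookup: "CL_ideal G S = lookup ` CL_ideal_nc G S"
  unfolding CL_ideal_def CL_rels_lookup fa_ideal_lookup ..

lemma gen_in_gens_iff[simp]:
  "GV v \<in> gens G \<longleftrightarrow> v \<in> verts G" "GE e \<in> gens G \<longleftrightarrow> e \<in> edges G" "GG e \<in> gens G \<longleftrightarrow> e \<in> edges G"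
  by (auto simp: gens_def)

lemma nc_over_vtx[intro]: "v \<in> verts G \<Longrightarrow> nc_over (gens G) (vtx v)"
    by (simp add: vtx_def nc_over_single)
lemma nc_over_edg[intro]: "e \<in> edges G \<Longrightarrow> nc_over (gens G) (edg e)"
    by (simp add: edg_def nc_over_single)
lemma nc_over_ghost[intro]: "e \<in> edges G \<Longrightarrow> nc_over (gens G) (ghost e)"
    by (simp add: ghost_def nc_over_single)
lemma nc_over_edge_sum[intro]: "nc_over (gens G) (edge_sum G v)"
  unfolding edge_sum_def by (intro nc_over_sum nc_over_mult) (auto simp: out_edges_def)

lemma vtx_mult_vtx_rel:
  "v \<in> verts G \<Longrightarrow> w \<in> verts G \<Longrightarrow>
   ideal_cong (CL_ideal_nc G S) (vtx v * vtx w)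
       (if v = w then vtx v else (0::(('v,'e) gen,'k::field) ncpoly))"
  by (rule ideal_cong_base) (auto simp: CL_rels_nc_def)

lemma src_mult_edg_rel:
  "e \<in> edges G \<Longrightarrow> ideal_cong (CL_ideal_nc G S) (vtx (src G e) * edg e)
      (edg e :: (('v,'e) gen,'k::field) ncpoly)"
  by (rule ideal_cong_base) (auto simp: CL_rels_nc_def)

lemma edg_mult_rng_rel:
  "e \<in> edges G \<Longrightarrow> ideal_cong (CL_ideal_nc G S) (edg e * vtx (rng G e))
      (edg e :: (('v,'e) gen,'k::field) ncpoly)"
  by (rule ideal_cong_base) (auto simp: CL_rels_nc_def)

lemma rng_mult_ghost_rel:
  "e \<in> edges G \<Longrightarrow> ideal_cong (CL_ideal_nc G S) (vtx (rng G e) * ghost e)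
      (ghost e :: (('v,'e) gen,'k::field) ncpoly)"
  by (rule ideal_cong_base) (auto simp: CL_rels_nc_def)

lemma ghost_mult_src_rel:
  "e \<in> edges G \<Longrightarrow> ideal_cong (CL_ideal_nc G S) (ghost e * vtx (src G e))
      (ghost e :: (('v,'e) gen,'k::field) ncpoly)"
  by (rule ideal_cong_base) (auto simp: CL_rels_nc_def)

lemma ghost_mult_edg_rel:
  "e \<in> edges G \<Longrightarrow> f \<in> edges G \<Longrightarrow>
   ideal_cong (CL_ideal_nc G S) (ghost e * edg f)
       (if e = f then vtx (rng G e) else (0::(('v,'e) gen,'k::field) ncpoly))"
  by (rule ideal_cong_base) (auto simp: CL_rels_nc_def)

lemma vtx_edge_sum_rel:
  "v \<in> S \<Longrightarrow> ideal_cong (CL_ideal_nc G S) (vtx v) (edge_sum G v :: (('v,'e) gen,'k::field) ncpoly)"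
  by (rule ideal_cong_base) (auto simp: CL_rels_nc_def)

lemma out_edgesD: "e \<in> out_edges G v \<Longrightarrow> e \<in> edges G \<and> src G e = v"
  by (simp add: out_edges_def)

context
  fixes G :: "('v,'e) graph" and S :: "'v set"
  assumes wf: "wf_graph G"
begin

lemma src_in_verts: "e \<in> edges G \<Longrightarrow> src G e \<in> verts G"
  using wf by (simp add: wf_graph_def)

lemma rng_in_verts: "e \<in> edges G \<Longrightarrow> rng G e \<in> verts G"
  using wf by (simp add: wf_graph_def)

lemma vtx_mult_edg: assumes "v \<in> verts G" "f \<in> edges G"
  shows "ideal_cong (CL_ideal_nc G S) (vtx v * edg f)
      (if v = src G f then edg f else (0::(('v,'e) gen,'k::field) ncpoly))"
proof (cases "v = src G f")
  case True then show ?thesis using src_mult_edg_rel[OF assms(2)] by simp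
next
  case False
  have "ideal_cong (CL_ideal_nc G S) (vtx v * edg f) (vtx v * (vtx (src G f) * edg f))"
    by (rule ideal_cong_lmult[OF ideal_cong_sym[OF src_mult_edg_rel[OF assms(2)]]])
        (use assms in auto)
  also have "vtx v * (vtx (src G f) * edg f) = (vtx v * vtx (src G f)) * edg f"
      by (simp add: mult.assoc)
  also have "ideal_cong (CL_ideal_nc G S) \<dots> ((if v = src G f then vtx v else 0) * edg f)"
    by (rule ideal_cong_rmult[OF vtx_mult_vtx_rel]) (use assms src_in_verts in auto)
  finally show ?thesis using False by simp
qed

lemma edg_mult_vtx: assumes "v \<in> verts G" "f \<in> edges G"
  shows "ideal_cong (CL_ideal_nc G S) (edg f * vtx v)
      (if rng G f = v then edg f else (0::(('v,'e) gen,'k::field) ncpoly))"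
proof (cases "rng G f = v")
  case True then show ?thesis using edg_mult_rng_rel[OF assms(2)] by simp
next
  case False
  have "ideal_cong (CL_ideal_nc G S) (edg f * vtx v) ((edg f * vtx (rng G f)) * vtx v)"
    by (rule ideal_cong_rmult[OF ideal_cong_sym[OF edg_mult_rng_rel[OF assms(2)]]])
        (use assms in auto)
  also have "(edg f * vtx (rng G f)) * vtx v = edg f * (vtx (rng G f) * vtx v)"
      by (simp add: mult.assoc)
  also have "ideal_cong (CL_ideal_nc G S) \<dots> (edg f * (if rng G f = v then vtx (rng G f) else 0))"
    by (rule ideal_cong_lmult[OF vtx_mult_vtx_rel]) (use assms rng_in_verts in auto)
  finally show ?thesis using False by simp
qed

lemma vtx_mult_ghost: assumes "v \<in> verts G" "f \<in> edges G"
  shows "ideal_cong (CL_ideal_nc G S) (vtx v * ghost f)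
      (if v = rng G f then ghost f else (0::(('v,'e) gen,'k::field) ncpoly))"
proof (cases "v = rng G f")
  case True then show ?thesis using rng_mult_ghost_rel[OF assms(2)] by simp
next
  case False
  have "ideal_cong (CL_ideal_nc G S) (vtx v * ghost f) (vtx v * (vtx (rng G f) * ghost f))"
    by (rule ideal_cong_lmult[OF ideal_cong_sym[OF rng_mult_ghost_rel[OF assms(2)]]])
        (use assms in auto)
  also have "vtx v * (vtx (rng G f) * ghost f) = (vtx v * vtx (rng G f)) * ghost f"
      by (simp add: mult.assoc)
  also have "ideal_cong (CL_ideal_nc G S) \<dots> ((if v = rng G f then vtx v else 0) * ghost f)"
    by (rule ideal_cong_rmult[OF vtx_mult_vtx_rel]) (use assms rng_in_verts in auto)
  finally show ?thesis using False by simp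
qed

lemma ghost_mult_vtx: assumes "v \<in> verts G" "f \<in> edges G"
  shows "ideal_cong (CL_ideal_nc G S) (ghost f * vtx v)
      (if src G f = v then ghost f else (0::(('v,'e) gen,'k::field) ncpoly))"
proof (cases "src G f = v")
  case True then show ?thesis using ghost_mult_src_rel[OF assms(2)] by simp
next
  case False
  have "ideal_cong (CL_ideal_nc G S) (ghost f * vtx v) ((ghost f * vtx (src G f)) * vtx v)"
    by (rule ideal_cong_rmult[OF ideal_cong_sym[OF ghost_mult_src_rel[OF assms(2)]]])
        (use assms in auto)
  also have "(ghost f * vtx (src G f)) * vtx v = ghost f * (vtx (src G f) * vtx v)"
      by (simp add: mult.assoc)
  also have "ideal_cong (CL_ideal_nc G S) \<dots> (ghost f * (if src G f = v then vtx (src G f) else 0))"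
    by (rule ideal_cong_lmult[OF vtx_mult_vtx_rel]) (use assms src_in_verts in auto)
  finally show ?thesis using False by simp
qed

lemma vtx_mult_edge_sum: assumes "v \<in> verts G" "w \<in> verts G"
  shows "ideal_cong (CL_ideal_nc G S) (vtx w * edge_sum G v)
      (if w = v then edge_sum G v else (0::(('v,'e) gen,'k::field) ncpoly))"
proof -
  have "vtx w * edge_sum G v = (\<Sum>e\<in>out_edges G v. (vtx w * edg e) * ghost e)"
    by (simp add: edge_sum_def sum_distrib_left mult.assoc)
  also have "ideal_cong (CL_ideal_nc G S) \<dots>
      (\<Sum>e\<in>out_edges G v. (if w = v then edg e * ghost e else 0))"
  proof (rule ideal_cong_sum)
    fix e assume "e \<in> out_edges G v"
    then have e: "e \<in> edges G" "src G e = v" by (auto dest: out_edgesD)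
    have "ideal_cong (CL_ideal_nc G S) ((vtx w * edg e) * ghost e)
        ((if w = src G e then edg e else 0) * ghost e)"
      by (rule ideal_cong_rmult[OF vtx_mult_edg]) (use assms e in auto)
    then show "ideal_cong (CL_ideal_nc G S) ((vtx w * edg e) * ghost e)
        (if w = v then edg e * ghost e else 0)"
      using e by (cases "w = v") auto
  qed
  also have "(\<Sum>e\<in>out_edges G v. (if w = v then edg e * ghost e else 0))
      = (if w = v then edge_sum G v else 0)"
    by (simp add: edge_sum_def)
  finally show ?thesis .
qed

lemma edge_sum_mult_vtx: assumes "v \<in> verts G" "w \<in> verts G"
  shows "ideal_cong (CL_ideal_nc G S) (edge_sum G v * vtx w)
      (if v = w then edge_sum G v else (0::(('v,'e) gen,'k::field) ncpoly))"
proof -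
  have "edge_sum G v * vtx w = (\<Sum>e\<in>out_edges G v. edg e * (ghost e * vtx w))"
    by (simp add: edge_sum_def sum_distrib_right mult.assoc)
  also have "ideal_cong (CL_ideal_nc G S) \<dots>
      (\<Sum>e\<in>out_edges G v. (if v = w then edg e * ghost e else 0))"
  proof (rule ideal_cong_sum)
    fix e assume "e \<in> out_edges G v"
    then have e: "e \<in> edges G" "src G e = v" by (auto dest: out_edgesD)
    have "ideal_cong (CL_ideal_nc G S) (edg e * (ghost e * vtx w))
        (edg e * (if src G e = w then ghost e else 0))"
      by (rule ideal_cong_lmult[OF ghost_mult_vtx]) (use assms e in auto)
    then show "ideal_cong (CL_ideal_nc G S) (edg e * (ghost e * vtx w))
        (if v = w then edg e * ghost e else 0)"
      using e by (cases "v = w") auto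
  qed
  also have "(\<Sum>e\<in>out_edges G v. (if v = w then edg e * ghost e else 0))
      = (if v = w then edge_sum G v else 0)"
    by (simp add: edge_sum_def)
  finally show ?thesis .
qed

lemma ghost_mult_edge_sum: assumes "finite (out_edges G v)" "e \<in> edges G"
  shows "ideal_cong (CL_ideal_nc G S) (ghost e * edge_sum G v)
      (if src G e = v then ghost e else (0::(('v,'e) gen,'k::field) ncpoly))"
proof -
  have "ghost e * edge_sum G v = (\<Sum>f\<in>out_edges G v. (ghost e * edg f) * ghost f)"
    by (simp add: edge_sum_def sum_distrib_left mult.assoc)
  also have "ideal_cong (CL_ideal_nc G S) \<dots>
      (\<Sum>f\<in>out_edges G v. (if e = f then vtx (rng G e) * ghost e else 0))"
  proof (rule ideal_cong_sum)
    fix f assume "f \<in> out_edges G v"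
    then have f: "f \<in> edges G" "src G f = v" by (auto dest: out_edgesD)
    have "ideal_cong (CL_ideal_nc G S) ((ghost e * edg f) * ghost f)
        ((if e = f then vtx (rng G e) else 0) * ghost f)"
      by (rule ideal_cong_rmult[OF ghost_mult_edg_rel]) (use assms f in auto)
    then show "ideal_cong (CL_ideal_nc G S) ((ghost e * edg f) * ghost f)
        (if e = f then vtx (rng G e) * ghost e else 0)"
      by (cases "e = f") auto
  qed
  also have "(\<Sum>f\<in>out_edges G v. (if e = f then vtx (rng G e) * ghost e else 0)) =
      (if src G e = v then vtx (rng G e) * ghost e else 0)"
    using assms by (simp add: out_edges_def)
  also have "ideal_cong (CL_ideal_nc G S) \<dots> (if src G e = v then ghost e else 0)"
    using rng_mult_ghost_rel[OF assms(2)] by (cases "src G e = v") auto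
  finally show ?thesis .
qed

lemma edge_sum_mult_edg: assumes "finite (out_edges G v)" "e \<in> edges G"
  shows "ideal_cong (CL_ideal_nc G S) (edge_sum G v * edg e)
      (if src G e = v then edg e else (0::(('v,'e) gen,'k::field) ncpoly))"
proof -
  have "edge_sum G v * edg e = (\<Sum>f\<in>out_edges G v. edg f * (ghost f * edg e))"
    by (simp add: edge_sum_def sum_distrib_right mult.assoc)
  also have "ideal_cong (CL_ideal_nc G S) \<dots>
      (\<Sum>f\<in>out_edges G v. (if f = e then edg e * vtx (rng G e) else 0))"
  proof (rule ideal_cong_sum)
    fix f assume "f \<in> out_edges G v"
    then have f: "f \<in> edges G" "src G f = v" by (auto dest: out_edgesD)
    have "ideal_cong (CL_ideal_nc G S) (edg f * (ghost f * edg e))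
        (edg f * (if f = e then vtx (rng G f) else 0))"
      by (rule ideal_cong_lmult[OF ghost_mult_edg_rel]) (use assms f in auto)
    then show "ideal_cong (CL_ideal_nc G S) (edg f * (ghost f * edg e))
        (if f = e then edg e * vtx (rng G e) else 0)"
      by (cases "e = f") auto
  qed
  also have "(\<Sum>f\<in>out_edges G v. (if f = e then edg e * vtx (rng G e) else 0)) =
      (if src G e = v then edg e * vtx (rng G e) else 0)"
    using assms by (simp add: out_edges_def)
  also have "ideal_cong (CL_ideal_nc G S) \<dots> (if src G e = v then edg e else 0)"
    using edg_mult_rng_rel[OF assms(2)] by (cases "src G e = v") auto
  finally show ?thesis .
qed

lemma edge_sum_mult_edge_sum: assumes "v \<in> verts G" "w \<in> verts G"
  shows "ideal_cong (CL_ideal_nc G S) (edge_sum G v * edge_sum G w)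
      (if v = w then edge_sum G v else (0::(('v,'e) gen,'k::field) ncpoly))"
proof (cases "finite (out_edges G v)")
  case False
  then show ?thesis by (cases "v = w") (simp_all add: edge_sum_def)
next
  case True
  have "edge_sum G v * edge_sum G w = (\<Sum>f\<in>out_edges G w. (edge_sum G v * edg f) * ghost f)"
    by (simp add: edge_sum_def[of G w] sum_distrib_left mult.assoc)
  also have "ideal_cong (CL_ideal_nc G S) \<dots>
      (\<Sum>f\<in>out_edges G w. (if v = w then edg f * ghost f else 0))"
  proof (rule ideal_cong_sum)
    fix f assume "f \<in> out_edges G w"
    then have f: "f \<in> edges G" "src G f = w" by (auto dest: out_edgesD)
    have "ideal_cong (CL_ideal_nc G S) ((edge_sum G v * edg f) * ghost f)
        ((if src G f = v then edg f else 0) * ghost f)"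
      by (rule ideal_cong_rmult[OF edge_sum_mult_edg]) (use True f in auto)
    then show "ideal_cong (CL_ideal_nc G S) ((edge_sum G v * edg f) * ghost f)
        (if v = w then edg f * ghost f else 0)"
      using f by auto
  qed
  also have "(\<Sum>f\<in>out_edges G w. (if v = w then edg f * ghost f else 0))
      = (if v = w then edge_sum G v else 0)"
    by (simp add: edge_sum_def)
  finally show ?thesis .
qed

end

abbreviation split_verts :: "('v,'e) graph \<Rightarrow> 'v set \<Rightarrow> 'v set" where
  "split_verts E S \<equiv> regular E - S"

lemma ES_simps[simp]:
  "verts (ES_graph E S) = Inl ` verts E \<union> Inr ` split_verts E S"
  "edges (ES_graph E S) = Inl ` edges E \<union> Inr ` {e \<in> edges E. rng E e \<in> split_verts E S}"
  "src (ES_graph E S) (Inl e) = Inl (src E e)"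
  "src (ES_graph E S) (Inr e) = Inl (src E e)"
  "rng (ES_graph E S) (Inl e) = Inl (rng E e)"
  "rng (ES_graph E S) (Inr e) = Inr (rng E e)"
  by (simp_all add: ES_graph_def)

lemma ES_mem[simp]:
  "Inl v \<in> verts (ES_graph E S) \<longleftrightarrow> v \<in> verts E"
  "Inr v \<in> verts (ES_graph E S) \<longleftrightarrow> v \<in> split_verts E S"
  "Inl e \<in> edges (ES_graph E S) \<longleftrightarrow> e \<in> edges E"
  "Inr e \<in> edges (ES_graph E S) \<longleftrightarrow> e \<in> edges E \<and> rng E e \<in> split_verts E S"
  by auto

lemma regular_verts: "regular E \<subseteq> verts E"
  by (auto simp: regular_def)

lemma out_edges_ES_Inl: "out_edges (ES_graph E S) (Inl v) =
    Inl ` out_edges E v \<union> Inr ` {e \<in> out_edges E v. rng E e \<in> split_verts E S}"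
  by (auto simp: out_edges_def ES_graph_def)

lemma out_edges_ES_Inr: "out_edges (ES_graph E S) (Inr v) = {}"
  by (auto simp: out_edges_def ES_graph_def)

lemma edge_sum_ES_Inl:
  assumes "finite (out_edges E v)"
  shows "edge_sum (ES_graph E S) (Inl v) =
    (\<Sum>e\<in>out_edges E v. edg (Inl e) * ghost (Inl e)
      + (if rng E e \<in> split_verts E S then edg (Inr e) * ghost (Inr e) else
          (0::(_,'k::field) ncpoly)))"
proof -
  let ?A = "out_edges E v" and ?B = "{e \<in> out_edges E v. rng E e \<in> split_verts E S}"
  have "edge_sum (ES_graph E S) (Inl v) = (\<Sum>a\<in>Inl ` ?A \<union> Inr ` ?B. edg a * ghost a)"
    by (simp add: edge_sum_def out_edges_ES_Inl)
  also have "\<dots> = (\<Sum>a\<in>Inl ` ?A. edg a * ghost a) + (\<Sum>a\<in>Inr ` ?B. edg a * ghost a)"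
    by (rule sum.union_disjoint) (use assms in auto)
  also have "\<dots> = (\<Sum>e\<in>?A. edg (Inl e) * ghost (Inl e)) + (\<Sum>e\<in>?B. edg (Inr e) * ghost (Inr e))"
    by (simp add: sum.reindex)
  also have "(\<Sum>e\<in>?B. edg (Inr e) * ghost (Inr e))
      = (\<Sum>e\<in>?A. if rng E e \<in> split_verts E S then edg (Inr e) * ghost (Inr e) else 0)"
    by (rule sum.inter_filter[OF assms])
  finally show ?thesis by (simp add: sum.distrib)
qed

lemma regular_ES: fixes E :: "('v,'e) graph"
  shows "regular (ES_graph E S) = Inl ` regular E"
proof -
  have "Inl v \<in> regular (ES_graph E S) \<longleftrightarrow> v \<in> regular E" for v
  proof -
    have f: "finite (out_edges (ES_graph E S) (Inl v)) \<longleftrightarrow> finite (out_edges E v)"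
    proof
      assume "finite (out_edges (ES_graph E S) (Inl v))"
      then have "finite (Inl ` out_edges E v :: ('e + 'e) set)" unfolding out_edges_ES_Inl by simp
      then show "finite (out_edges E v)" by (simp add: finite_image_iff)
    next
      assume "finite (out_edges E v)"
      then show "finite (out_edges (ES_graph E S) (Inl v))" unfolding out_edges_ES_Inl by simp
    qed
    show ?thesis unfolding regular_def using f by (auto simp: out_edges_ES_Inl)
  qed
  moreover have "Inr v \<notin> regular (ES_graph E S)" for v
    by (simp add: regular_def out_edges_ES_Inr)
  ultimately show ?thesis by (auto elim: sumE) (metis Inl_Inr_False sumE imageI)+
qed

lemma wf_graph_ES: "wf_graph E \<Longrightarrow> wf_graph (ES_graph E S)"
  by (auto simp: wf_graph_def ES_graph_def out_edges_def)

section \<open>The map \<phi>\<close>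

definition phi_v :: "('v,'e) graph \<Rightarrow> 'v set \<Rightarrow> 'v + 'v \<Rightarrow> (('v,'e) gen,'k::field) ncpoly" where
  "phi_v E S x = (case x of Inl v \<Rightarrow> (if v \<in> split_verts E S then edge_sum E v else vtx v) | Inr v
      \<Rightarrow> vtx v - edge_sum E v)"

definition phi_e :: "('v,'e) graph \<Rightarrow> 'v set \<Rightarrow> 'e + 'e \<Rightarrow> (('v,'e) gen,'k::field) ncpoly" where
  "phi_e E S a = (case a of Inl e \<Rightarrow> edg e * phi_v E S (Inl (rng E e)) | Inr e \<Rightarrow> edg e * phi_v E S
      (Inr (rng E e)))"

definition phi_nc :: "('k \<Rightarrow> 'k) \<Rightarrow> ('v,'e) graph \<Rightarrow> 'v set \<Rightarrow> ('v + 'v, 'e + 'e) gen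
    \<Rightarrow> (('v,'e) gen,'k::field) ncpoly" where
  "phi_nc c E S g =
    (case g of GV x \<Rightarrow> phi_v E S x | GE a \<Rightarrow> phi_e E S a | GG a \<Rightarrow> nc_star c (phi_e E S a))"

lemma phi_nc_simps[simp]:
  "phi_nc c E S (GV x) = phi_v E S x" "phi_nc c E S (GE a) = phi_e E S a" "phi_nc c E S (GG a)
      = nc_star c (phi_e E S a)"
  by (simp_all add: phi_nc_def)

lemma phi_vert_lookup: "phi_vert E S x = lookup (phi_v E S x)"
  by (cases x)
    (simp_all add: phi_vert_def phi_v_def Psum_lookup ghat_lookup vtx_def fa_diff_lookup if_lookup)

lemma phi_edge_lookup: "phi_edge E S a = lookup (phi_e E S a)"
  by (cases a) (simp_all add: phi_edge_def phi_e_def phi_vert_lookup ghat_lookup edg_def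
      fa_mult_lookup)

lemma phi_gen_lookup: assumes "involution c" shows "phi_gen c E S = (\<lambda>g. lookup (phi_nc c E S g))"
proof
  fix g show "phi_gen c E S g = lookup (phi_nc c E S g)"
    by (cases g) (simp_all add: phi_gen_def phi_vert_lookup phi_edge_lookup
        fa_star_lookup[OF assms])
qed

context
  fixes c :: "'k::field \<Rightarrow> 'k"
  assumes c: "involution c"
begin

lemma nc_star_vtx[simp]: "nc_star c (vtx v) = vtx v" by (simp add: vtx_def nc_star_gen[OF c])
lemma nc_star_edg[simp]: "nc_star c (edg e) = ghost e"
    by (simp add: edg_def ghost_def nc_star_gen[OF c])
lemma nc_star_ghost[simp]: "nc_star c (ghost e) = edg e"
    by (simp add: edg_def ghost_def nc_star_gen[OF c])
lemma nc_star_edge_sum[simp]: "nc_star c (edge_sum G v) = edge_sum G v"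
  by (simp add: edge_sum_def nc_star_sum[OF c] nc_star_mult[OF c])
lemma nc_star_phi_v[simp]: "nc_star c (phi_v E S x) = phi_v E S x"
  by (cases x) (simp_all add: phi_v_def nc_star_diff[OF c])

lemma phi_nc_ghost: "phi_nc c E S (GG (Inl e)) = phi_v E S (Inl (rng E e)) * ghost e"
   "phi_nc c E S (GG (Inr e)) = phi_v E S (Inr (rng E e)) * ghost e"
  by (simp_all add: phi_e_def nc_star_mult[OF c])

lemma phi_nc_gstar: "phi_nc c E S (gstar g) = nc_star c (phi_nc c E S g)"
  by (cases g) (simp_all add: nc_star_nc_star[OF c] phi_nc_def)

end

text \<open>
  Every \<phi>(x) for a vertex x of E_S has the form a v + b \<Sum>e e* with v the underlying vertex of
  E; such combinations multiply componentwise because v and \<Sum>e e* are commuting idempotents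
  with (\<Sum>e e*) v = \<Sum>e e*.
\<close>

definition vertex_comb :: "('v,'e) graph \<Rightarrow> 'k \<Rightarrow> 'k \<Rightarrow> 'v \<Rightarrow> (('v,'e) gen,'k::field) ncpoly" where
  "vertex_comb E a b v = scalar a * vtx v + scalar b * edge_sum E v"

fun base_vertex :: "'v + 'v \<Rightarrow> 'v" where "base_vertex (Inl v) = v" | "base_vertex (Inr v) = v"

definition vtx_coeff :: "('v,'e) graph \<Rightarrow> 'v set \<Rightarrow> 'v + 'v \<Rightarrow> 'k::field" where
  "vtx_coeff E S x = (case x of Inl v \<Rightarrow> (if v \<in> split_verts E S then 0 else 1) | Inr v \<Rightarrow> 1)"
definition sum_coeff :: "('v,'e) graph \<Rightarrow> 'v set \<Rightarrow> 'v + 'v \<Rightarrow> 'k::field" where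
  "sum_coeff E S x = (case x of Inl v \<Rightarrow> (if v \<in> split_verts E S then 1 else 0) | Inr v \<Rightarrow> -1)"

lemma phi_v_vertex_comb: "phi_v E S x = vertex_comb E (vtx_coeff E S x) (sum_coeff E S x)
    (base_vertex x)"
  by (cases x) (simp_all add: phi_v_def vertex_comb_def vtx_coeff_def sum_coeff_def
      scalar_minus_one)

lemma vertex_comb_zero[simp]: "vertex_comb E 0 0 v = 0" by (simp add: vertex_comb_def)
lemma vtx_vertex_comb: "vtx v = vertex_comb E 1 0 v" by (simp add: vertex_comb_def)

context
  fixes E :: "('v,'e) graph" and S :: "'v set"
  assumes wf: "wf_graph E" and SR: "S \<subseteq> regular E"
begin

lemma vertex_comb_mult: assumes "v \<in> verts E" "w \<in> verts E"
  shows "ideal_cong (CL_ideal_nc E S) (vertex_comb E a b v * vertex_comb E a' b' w)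
     (if v = w then vertex_comb E (a * a') (a * b' + b * a' + b * b') v else
         (0::(('v,'e) gen,'k::field) ncpoly))"
proof -
  have "vertex_comb E a b v * vertex_comb E a' b' w = scalar (a*a') * (vtx v * vtx w) + scalar
      (a*b') * (vtx v * edge_sum E w)
      + scalar (b*a') * (edge_sum E v * vtx w) + scalar (b*b') * (edge_sum E v * edge_sum E w)"
    by (simp add: vertex_comb_def distrib_left distrib_right scalar_mult_mult add.assoc)
  also have "ideal_cong (CL_ideal_nc E S) \<dots>
      (scalar (a*a') * (if v = w then vtx v else 0) + scalar (a*b')
      * (if v = w then edge_sum E w else 0)
      + scalar (b*a') * (if v = w then edge_sum E v else 0) + scalar (b*b')
          * (if v = w then edge_sum E v else 0))"
    by (intro ideal_cong_add ideal_cong_scalar_mult vtx_mult_vtx_rel vtx_mult_edge_sum[OF wf]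
        edge_sum_mult_vtx[OF wf] edge_sum_mult_edge_sum[OF wf]) (use assms in auto)
  also have "\<dots> = (if v = w then vertex_comb E (a * a') (a * b' + b * a' + b * b') v else 0)"
    by (simp add: vertex_comb_def scalar_add distrib_right add.assoc)
  finally show ?thesis .
qed

lemma base_vertex_verts: "x \<in> verts (ES_graph E S) \<Longrightarrow> base_vertex x \<in> verts E"
  using SR regular_verts[of E] by (cases x) auto

lemma phi_v_mult_phi_v: assumes "x \<in> verts (ES_graph E S)" "y \<in> verts (ES_graph E S)"
  shows "ideal_cong (CL_ideal_nc E S) (phi_v E S x * phi_v E S y)
      (if x = y then phi_v E S x else (0::(('v,'e) gen,'k::field) ncpoly))"
proof -
  have "ideal_cong (CL_ideal_nc E S) (phi_v E S x * phi_v E S y)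
      (if base_vertex x = base_vertex y then vertex_comb E (vtx_coeff E S x * vtx_coeff E S y)
     (vtx_coeff E S x * sum_coeff E S y + sum_coeff E S x * vtx_coeff E S y + sum_coeff E S x
         * sum_coeff E S y) (base_vertex x) else 0)"
    unfolding phi_v_vertex_comb by (rule vertex_comb_mult) (use assms base_vertex_verts in auto)
  also have "(if base_vertex x = base_vertex y then vertex_comb E
      (vtx_coeff E S x * vtx_coeff E S y)
     (vtx_coeff E S x * sum_coeff E S y + sum_coeff E S x * vtx_coeff E S y + sum_coeff E S x
         * sum_coeff E S y) (base_vertex x) else 0) =
     (if x = y then phi_v E S x else 0)"
    using assms by (cases x; cases y) (auto simp: vtx_coeff_def sum_coeff_def phi_v_vertex_comb)
  finally show ?thesis .
qed

lemma phi_v_idempotent: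
  "x \<in> verts (ES_graph E S) \<Longrightarrow> ideal_cong (CL_ideal_nc E S) (phi_v E S x * phi_v E S x)
      (phi_v E S x)"
  using phi_v_mult_phi_v[of x x] by simp

lemma vtx_mult_phi_v:
  assumes "x \<in> verts (ES_graph E S)" "w \<in> verts E"
  shows "ideal_cong (CL_ideal_nc E S) (vtx w * phi_v E S x)
    (if w = base_vertex x then phi_v E S x else (0::(('v,'e) gen,'k::field) ncpoly))"
proof -
  have "vtx w * phi_v E S x
      = vertex_comb E 1 0 w * vertex_comb E (vtx_coeff E S x) (sum_coeff E S x) (base_vertex x)"
    by (simp only: vtx_vertex_comb[of w E] phi_v_vertex_comb)
  also have "ideal_cong (CL_ideal_nc E S) \<dots>
      (if w = base_vertex x then vertex_comb E (1 * vtx_coeff E S x)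
      (1 * sum_coeff E S x + 0 * vtx_coeff E S x + 0 * sum_coeff E S x) w else 0)"
    by (rule vertex_comb_mult) (use assms base_vertex_verts in auto)
  also have "\<dots> = (if w = base_vertex x then phi_v E S x else 0)"
    by (simp add: phi_v_vertex_comb)
  finally show ?thesis .
qed

lemma phi_v_split:
  "phi_v E S (Inl v) + (if v \<in> split_verts E S then phi_v E S (Inr v) else 0) = vtx v"
  by (simp add: phi_v_def)

lemma regular_finite_out_edges: "v \<in> regular E \<Longrightarrow> finite (out_edges E v)"
  by (simp add: regular_def)

lemma phi_v_src_mult_edg: assumes "e \<in> edges E"
  shows "ideal_cong (CL_ideal_nc E S) (phi_v E S (Inl (src E e)) * edg e)
      (edg e :: (('v,'e) gen,'k::field) ncpoly)"
proof (cases "src E e \<in> split_verts E S")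
  case True
  then have "(phi_v E S (Inl (src E e)) :: (('v,'e) gen,'k) ncpoly) = edge_sum E (src E e)"
      by (simp add: phi_v_def)
  then show ?thesis
    using True edge_sum_mult_edg[OF wf regular_finite_out_edges assms, of "src E e" S] by simp
next
  case False
  then have "(phi_v E S (Inl (src E e)) :: (('v,'e) gen,'k) ncpoly) = vtx (src E e)"
      by (auto simp add: phi_v_def)
  then show ?thesis using src_mult_edg_rel[OF assms, of S] by simp
qed

lemma ghost_mult_phi_v_src: assumes "e \<in> edges E"
  shows "ideal_cong (CL_ideal_nc E S) (ghost e * phi_v E S (Inl (src E e)))
      (ghost e :: (('v,'e) gen,'k::field) ncpoly)"
proof (cases "src E e \<in> split_verts E S")
  case True
  then have "(phi_v E S (Inl (src E e)) :: (('v,'e) gen,'k) ncpoly) = edge_sum E (src E e)"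
      by (simp add: phi_v_def)
  then show ?thesis
    using True ghost_mult_edge_sum[OF wf regular_finite_out_edges assms, of "src E e" S] by simp
next
  case False
  then have "(phi_v E S (Inl (src E e)) :: (('v,'e) gen,'k) ncpoly) = vtx (src E e)"
      by (auto simp add: phi_v_def)
  then show ?thesis using ghost_mult_src_rel[OF assms, of S] by simp
qed

lemma nc_over_phi_v[intro]: "base_vertex x \<in> verts E \<Longrightarrow> nc_over (gens E) (phi_v E S x)"
  by (cases x) (auto simp: phi_v_def)

lemma rng_ES_verts: "a \<in> edges (ES_graph E S) \<Longrightarrow> rng (ES_graph E S) a \<in> verts (ES_graph E S)"
  using wf_graph_ES[OF wf] by (simp add: wf_graph_def)

lemma nc_over_phi_v_rng: "a \<in> edges (ES_graph E S) \<Longrightarrow> nc_over (gens E)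
    (phi_v E S (rng (ES_graph E S) a) :: (('v,'e) gen,'k::field) ncpoly)"
  by (intro nc_over_phi_v base_vertex_verts rng_ES_verts)

lemma nc_over_phi_v_verts: "x \<in> verts (ES_graph E S) \<Longrightarrow> nc_over (gens E)
    (phi_v E S x :: (('v,'e) gen,'k::field) ncpoly)"
  by (intro nc_over_phi_v base_vertex_verts)

end

fun base_edge :: "'e + 'e \<Rightarrow> 'e" where "base_edge (Inl e) = e" | "base_edge (Inr e) = e"

lemma phi_e_base_edge: "phi_e E S a = edg (base_edge a) * phi_v E S (rng (ES_graph E S) a)"
  by (cases a) (simp_all add: phi_e_def)

lemma src_ES_base_edge: "src (ES_graph E S) a = Inl (src E (base_edge a))"
  by (cases a) simp_all

lemma base_vertex_rng_ES: "base_vertex (rng (ES_graph E S) a) = rng E (base_edge a)"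
  by (cases a) simp_all

lemma base_edge_edges: "a \<in> edges (ES_graph E S) \<Longrightarrow> base_edge a \<in> edges E"
  by (cases a) auto

lemma nc_eval_vtx[simp]: "nc_eval F (vtx x) = F (GV x)" by (simp add: vtx_def)
lemma nc_eval_edg[simp]: "nc_eval F (edg x) = F (GE x)" by (simp add: edg_def)
lemma nc_eval_ghost[simp]: "nc_eval F (ghost x) = F (GG x)" by (simp add: ghost_def)
lemma nc_eval_if_zero: "nc_eval F (if P then a else 0) = (if P then nc_eval F a else 0)" by simp
lemma nc_eval_edge_sum: "nc_eval F (edge_sum G v) = (\<Sum>a\<in>out_edges G v. F (GE a) * F (GG a))"
  by (simp add: edge_sum_def nc_eval_sum nc_eval_mult)

context
  fixes E :: "('v,'e) graph" and S :: "'v set" and c :: "'k::field \<Rightarrow> 'k"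
  assumes wf: "wf_graph E" and SR: "S \<subseteq> regular E" and c: "involution c"
begin

lemma phi_nc_ghost_base_edge:
  "phi_nc c E S (GG a) = phi_v E S (rng (ES_graph E S) a) * ghost (base_edge a)"
  by (simp add: phi_e_base_edge nc_star_mult[OF c] nc_star_phi_v[OF c] nc_star_edg[OF c])

lemmas nc_star_simps = nc_star_mult[OF c] nc_star_phi_v[OF c] nc_star_edg[OF c]

lemma phi_rel_V: assumes "x \<in> verts (ES_graph E S)" "y \<in> verts (ES_graph E S)"
  shows "nc_eval (phi_nc c E S) (vtx x * vtx y - (if x = y then vtx x else 0)) \<in> CL_ideal_nc E S"
  using phi_v_mult_phi_v[OF wf SR assms] by (cases "x = y")
      (simp_all add: nc_eval_diff nc_eval_mult ideal_cong_def)

lemma phi_rel_E1_src: assumes "a \<in> edges (ES_graph E S)"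
  shows "nc_eval (phi_nc c E S) (vtx (src (ES_graph E S) a) * edg a - edg a) \<in> CL_ideal_nc E S"
proof -
  let ?q = "phi_v E S (rng (ES_graph E S) a) :: (('v,'e) gen,'k) ncpoly"
  have "ideal_cong (CL_ideal_nc E S) (phi_v E S (Inl (src E (base_edge a))) * edg (base_edge a)
      * ?q) (edg (base_edge a) * ?q)"
    by (rule ideal_cong_rmult[OF phi_v_src_mult_edg[OF wf SR base_edge_edges[OF assms]]
        nc_over_phi_v_rng[OF wf SR assms]])
  then show ?thesis by (simp add: nc_eval_diff nc_eval_mult ideal_cong_def phi_e_base_edge
      src_ES_base_edge mult.assoc)
qed

lemma phi_rel_E1_rng: assumes "a \<in> edges (ES_graph E S)"
  shows "nc_eval (phi_nc c E S) (edg a * vtx (rng (ES_graph E S) a) - edg a) \<in> CL_ideal_nc E S"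
proof -
  let ?r = "rng (ES_graph E S) a"
  have "ideal_cong (CL_ideal_nc E S) (edg (base_edge a) * (phi_v E S ?r * phi_v E S ?r))
      (edg (base_edge a) * phi_v E S ?r)"
    by (rule ideal_cong_lmult[OF phi_v_idempotent[OF wf SR]])
      (use assms rng_ES_verts[OF wf SR] base_edge_edges in auto)
  then show ?thesis
    by (simp add: nc_eval_diff nc_eval_mult ideal_cong_def phi_e_base_edge mult.assoc)
qed

lemma phi_rel_E2_rng: assumes "a \<in> edges (ES_graph E S)"
  shows "nc_eval (phi_nc c E S) (vtx (rng (ES_graph E S) a) * ghost a - ghost a) \<in> CL_ideal_nc E S"
proof -
  let ?r = "rng (ES_graph E S) a"
  have "ideal_cong (CL_ideal_nc E S) ((phi_v E S ?r * phi_v E S ?r) * ghost (base_edge a))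
      (phi_v E S ?r * ghost (base_edge a))"
    by (rule ideal_cong_rmult[OF phi_v_idempotent[OF wf SR]])
      (use assms rng_ES_verts[OF wf SR] base_edge_edges in auto)
  then show ?thesis by (simp add: nc_eval_diff nc_eval_mult ideal_cong_def phi_e_base_edge
      nc_star_simps mult.assoc)
qed

lemma phi_rel_E2_src: assumes "a \<in> edges (ES_graph E S)"
  shows "nc_eval (phi_nc c E S) (ghost a * vtx (src (ES_graph E S) a) - ghost a) \<in> CL_ideal_nc E S"
proof -
  let ?q = "phi_v E S (rng (ES_graph E S) a) :: (('v,'e) gen,'k) ncpoly"
  have "ideal_cong (CL_ideal_nc E S) (?q * (ghost (base_edge a) * phi_v E S (Inl (src E (base_edge
      a))))) (?q * ghost (base_edge a))"
    by (rule ideal_cong_lmult[OF ghost_mult_phi_v_src[OF wf SR base_edge_edges[OF assms]]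
        nc_over_phi_v_rng[OF wf SR assms]])
  then show ?thesis by (simp add: nc_eval_diff nc_eval_mult ideal_cong_def phi_e_base_edge
      nc_star_simps src_ES_base_edge mult.assoc)
qed

lemma phi_rel_CK1: assumes a: "a \<in> edges (ES_graph E S)" and b: "b \<in> edges (ES_graph E S)"
  shows "nc_eval (phi_nc c E S) (ghost a * edg b - (if a = b then vtx (rng (ES_graph E S) a) else
      0)) \<in> CL_ideal_nc E S"
proof -
  let ?ra = "rng (ES_graph E S) a" and ?rb = "rng (ES_graph E S) b"
  let ?pa = "phi_v E S ?ra :: (('v,'e) gen,'k) ncpoly"
    and ?pb = "phi_v E S ?rb :: (('v,'e) gen,'k) ncpoly"
  have ea: "base_edge a \<in> edges E" and eb: "base_edge b \<in> edges E" using a b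
      by (auto intro: base_edge_edges)
  have "?pa * ghost (base_edge a) * (edg (base_edge b) * ?pb) = ?pa
      * (ghost (base_edge a) * edg (base_edge b)) * ?pb"
    by (simp add: mult.assoc)
  also have "ideal_cong (CL_ideal_nc E S) \<dots>
      (?pa * (if base_edge a = base_edge b then vtx (rng E (base_edge a)) else 0) * ?pb)"
    by (intro ideal_cong_rmult ideal_cong_lmult ghost_mult_edg_rel[OF ea eb]
        nc_over_phi_v_rng[OF wf SR] a b)
  also have "ideal_cong (CL_ideal_nc E S) \<dots> (if a = b then ?pa else 0)"
  proof (cases "base_edge a = base_edge b")
    case False
    then have "a \<noteq> b" by auto
    then show ?thesis using False by simp
  next
    case True
    have "?pa * vtx (rng E (base_edge a)) * ?pb = ?pa * (vtx (rng E (base_edge a)) * ?pb)"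
        by (simp add: mult.assoc)
    also have "ideal_cong (CL_ideal_nc E S) \<dots>
        (?pa * (if rng E (base_edge a) = base_vertex ?rb then ?pb else 0))"
      by (intro ideal_cong_lmult vtx_mult_phi_v[OF wf SR] nc_over_phi_v_rng[OF wf SR] a
          rng_ES_verts[OF wf SR] b rng_in_verts[OF wf ea])
    also have "\<dots> = ?pa * ?pb" using True by (simp add: base_vertex_rng_ES)
    also have "ideal_cong (CL_ideal_nc E S) \<dots> (if ?ra = ?rb then ?pa else 0)"
      by (intro phi_v_mult_phi_v[OF wf SR] rng_ES_verts[OF wf SR] a b)
    also have "(if ?ra = ?rb then ?pa else 0) = (if a = b then ?pa else 0)"
    proof -
      have "?ra = ?rb \<longleftrightarrow> a = b" using True by (cases a; cases b) auto
      then show ?thesis by simp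
    qed
    finally show ?thesis using True by simp
  qed
  finally have "ideal_cong (CL_ideal_nc E S) (?pa * ghost (base_edge a) * (edg (base_edge b) * ?pb))
      (if a = b then ?pa else 0)" .
  then show ?thesis
    by (cases "a = b") (simp_all add: nc_eval_diff nc_eval_mult ideal_cong_def phi_e_base_edge
        nc_star_simps)
qed

lemma phi_edge_pair:
  assumes e: "e \<in> edges E"
  shows "ideal_cong (CL_ideal_nc E S)
    (phi_nc c E S (GE (Inl e)) * phi_nc c E S (GG (Inl e))
      + (if rng E e \<in> split_verts E S
         then phi_nc c E S (GE (Inr e)) * phi_nc c E S (GG (Inr e)) else 0))
    (edg e * ghost e)"
proof -
  let ?r = "rng E e" and ?T = "split_verts E S"
  have r: "?r \<in> verts E" by (rule rng_in_verts[OF wf e])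
  have "phi_nc c E S (GE (Inl e)) * phi_nc c E S (GG (Inl e))
      + (if ?r \<in> ?T then phi_nc c E S (GE (Inr e)) * phi_nc c E S (GG (Inr e)) else 0)
    = edg e * (phi_v E S (Inl ?r) * phi_v E S (Inl ?r)) * ghost e
      + (if ?r \<in> ?T then edg e * (phi_v E S (Inr ?r) * phi_v E S (Inr ?r)) * ghost e else 0)"
    by (simp add: phi_e_def nc_star_simps mult.assoc)
  also have "ideal_cong (CL_ideal_nc E S) \<dots>
      (edg e * phi_v E S (Inl ?r) * ghost e
        + (if ?r \<in> ?T then edg e * phi_v E S (Inr ?r) * ghost e else 0))"
    using e r
    by (intro ideal_cong_add ideal_cong_if_zero ideal_cong_rmult ideal_cong_lmult
        phi_v_idempotent[OF wf SR])
      auto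
  also have "\<dots> = edg e * (phi_v E S (Inl ?r) + (if ?r \<in> ?T then phi_v E S (Inr ?r) else 0))
      * ghost e"
    by (simp add: distrib_left distrib_right)
  also have "\<dots> = edg e * vtx ?r * ghost e"
    by (simp only: phi_v_split[OF wf SR])
  also have "ideal_cong (CL_ideal_nc E S) \<dots> (edg e * ghost e)"
    by (rule ideal_cong_rmult[OF edg_mult_rng_rel[OF e]]) (use e in auto)
  finally show ?thesis .
qed

lemma phi_rel_CK2:
  assumes v: "v \<in> regular E"
  shows "nc_eval (phi_nc c E S) (vtx (Inl v) - edge_sum (ES_graph E S) (Inl v)) \<in> CL_ideal_nc E S"
proof -
  have "nc_eval (phi_nc c E S) (edge_sum (ES_graph E S) (Inl v))
      = (\<Sum>e\<in>out_edges E v. phi_nc c E S (GE (Inl e)) * phi_nc c E S (GG (Inl e))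
        + (if rng E e \<in> split_verts E S
           then phi_nc c E S (GE (Inr e)) * phi_nc c E S (GG (Inr e)) else 0))"
    using regular_finite_out_edges[OF wf SR v]
    by (simp add: edge_sum_ES_Inl nc_eval_sum nc_eval_add nc_eval_mult nc_eval_if_zero
        cong: if_cong)
  also have "ideal_cong (CL_ideal_nc E S) \<dots> (edge_sum E v)"
    unfolding edge_sum_def by (intro ideal_cong_sum phi_edge_pair) (simp add: out_edges_def)
  finally have sum: "ideal_cong (CL_ideal_nc E S)
      (nc_eval (phi_nc c E S) (edge_sum (ES_graph E S) (Inl v)))
      (edge_sum E v)" .
  have "ideal_cong (CL_ideal_nc E S) (phi_v E S (Inl v)) (edge_sum E v)"
  proof (cases "v \<in> S")
    case True
    then show ?thesis using vtx_edge_sum_rel[of v S E] by (simp add: phi_v_def)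
  qed (use v in \<open>simp add: phi_v_def\<close>)
  then show ?thesis
    using ideal_cong_trans[OF _ ideal_cong_sym[OF sum]] by (simp add: nc_eval_diff ideal_cong_def)
qed

lemma phi_rels: assumes "r \<in> CL_rels_nc (ES_graph E S) (regular (ES_graph E S))"
  shows "nc_eval (phi_nc c E S) r \<in> CL_ideal_nc E S"
proof -
  let ?G = "ES_graph E S"
  from assms consider
      (1) x y where "r = vtx x * vtx y - (if x = y then vtx x else 0)" "x \<in> verts ?G" "y \<in> verts ?G"
    | (2) a where "r = vtx (src ?G a) * edg a - edg a" "a \<in> edges ?G"
    | (3) a where "r = edg a * vtx (rng ?G a) - edg a" "a \<in> edges ?G"
    | (4) a where "r = vtx (rng ?G a) * ghost a - ghost a" "a \<in> edges ?G"
    | (5) a where "r = ghost a * vtx (src ?G a) - ghost a" "a \<in> edges ?G"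
    | (6) a b where "r = ghost a * edg b - (if a = b then vtx (rng ?G a) else 0)"
        "a \<in> edges ?G" "b \<in> edges ?G"
    | (7) x where "r = vtx x - edge_sum ?G x" "x \<in> regular ?G"
    unfolding CL_rels_nc_def by blast
  then show ?thesis
  proof cases
    case 1 then show ?thesis using phi_rel_V by simp
  next
    case 2 then show ?thesis using phi_rel_E1_src by simp
  next
    case 3 then show ?thesis using phi_rel_E1_rng by simp
  next
    case 4 then show ?thesis using phi_rel_E2_rng by simp
  next
    case 5 then show ?thesis using phi_rel_E2_src by simp
  next
    case 6 then show ?thesis using phi_rel_CK1 by simp
  next
    case 7
    then obtain v where "x = Inl v" "v \<in> regular E" by (auto simp: regular_ES)
    then show ?thesis using 7 phi_rel_CK2 by simp
  qed
qed

end

section \<open>The inverse map \<psi>\<close>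

abbreviation L_ideal_nc :: "('v,'e) graph \<Rightarrow> (('v,'e) gen,'k::field) ncpoly set" where
  "L_ideal_nc G \<equiv> CL_ideal_nc G (regular G)"

definition psi_nc ::
  "('v,'e) graph \<Rightarrow> 'v set \<Rightarrow> ('v,'e) gen \<Rightarrow> (('v + 'v,'e + 'e) gen,'k::field) ncpoly" where
  "psi_nc E S g = (case g of
      GV v \<Rightarrow> vtx (Inl v) + (if v \<in> split_verts E S then vtx (Inr v) else 0)
    | GE e \<Rightarrow> edg (Inl e) + (if rng E e \<in> split_verts E S then edg (Inr e) else 0)
    | GG e \<Rightarrow> ghost (Inl e) + (if rng E e \<in> split_verts E S then ghost (Inr e) else 0))"

lemma psi_nc_simps:
  "psi_nc E S (GV v) = vtx (Inl v) + (if v \<in> split_verts E S then vtx (Inr v) else 0)"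
  "psi_nc E S (GE e) = edg (Inl e) + (if rng E e \<in> split_verts E S then edg (Inr e) else 0)"
  "psi_nc E S (GG e) = ghost (Inl e) + (if rng E e \<in> split_verts E S then ghost (Inr e) else 0)"
  by (simp_all add: psi_nc_def)

lemma if_sum_mult_if_sum: "(x1 + (if P then x2 else 0)) * (y1 + (if Q then y2 else 0)) =
   x1 * y1 + (if Q then x1 * y2 else 0) + (if P then x2 * y1 else 0)
       + (if P \<and> Q then x2 * y2 else (0::'a::ring))"
  by (simp add: distrib_left distrib_right add.assoc)

context
  fixes E :: "('v,'e) graph" and S :: "'v set"
  assumes wf: "wf_graph E" and SR: "S \<subseteq> regular E"
begin

lemma nc_over_psi: "g \<in> gens E \<Longrightarrow> nc_over (gens (ES_graph E S)) (psi_nc E S g)"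
  using rng_in_verts[OF wf] by (cases g) (auto simp: psi_nc_simps intro!: nc_over_add)

lemma psi_rel_V: assumes "v \<in> verts E" "w \<in> verts E"
  shows "ideal_cong (L_ideal_nc (ES_graph E S)) (psi_nc E S (GV v) * psi_nc E S (GV w))
      (if v = w then psi_nc E S (GV v) else (0::(('v + 'v,'e + 'e) gen,'k::field) ncpoly))"
proof -
  have "ideal_cong (L_ideal_nc (ES_graph E S)) (psi_nc E S (GV v) * psi_nc E S (GV w))
      ((if (Inl v :: 'v + 'v) = Inl w then vtx (Inl v) else 0)
      + (if w \<in> split_verts E S then (if Inl v = Inr w then vtx (Inl v) else 0) else 0)
      + (if v \<in> split_verts E S then (if Inr v = Inl w then vtx (Inr v) else 0) else 0)
      + (if v \<in> split_verts E S \<and> w \<in> split_verts E S then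
          (if Inr v = (Inr w :: 'v + 'v) then vtx (Inr v) else 0) else 0))"
    unfolding psi_nc_simps if_sum_mult_if_sum
    by (intro ideal_cong_add ideal_cong_if_zero vtx_mult_vtx_rel) (use assms in auto)
  also have "\<dots> = (if v = w then psi_nc E S (GV v) else 0)"
    by (cases "v = w") (auto simp: psi_nc_simps)
  finally show ?thesis .
qed

lemma psi_rel_E1_src: assumes "e \<in> edges E"
  shows "ideal_cong (L_ideal_nc (ES_graph E S)) (psi_nc E S (GV (src E e)) * psi_nc E S (GE e))
      (psi_nc E S (GE e) :: (('v + 'v,'e + 'e) gen,'k::field) ncpoly)"
proof -
  have s: "src E e \<in> verts E" by (rule src_in_verts[OF wf assms])
  have "ideal_cong (L_ideal_nc (ES_graph E S)) (psi_nc E S (GV (src E e)) * psi_nc E S (GE e))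
      ((if Inl (src E e) = src (ES_graph E S) (Inl e) then edg (Inl e) else 0)
      + (if rng E e \<in> split_verts E S then (if Inl (src E e) = src (ES_graph E S) (Inr e) then edg
          (Inr e) else 0) else 0)
      + (if src E e \<in> split_verts E S then (if Inr (src E e) = src (ES_graph E S) (Inl e) then edg
          (Inl e) else 0) else 0)
      + (if src E e \<in> split_verts E S \<and> rng E e \<in> split_verts E S then
          (if Inr (src E e) = src (ES_graph E S) (Inr e) then edg (Inr e) else 0) else 0))"
    unfolding psi_nc_simps if_sum_mult_if_sum
    by (intro ideal_cong_add ideal_cong_if_zero vtx_mult_edg[OF wf_graph_ES[OF wf]])
        (use assms s in auto)
  also have "\<dots> = psi_nc E S (GE e)"
    by (simp add: psi_nc_simps)
  finally show ?thesis .
qed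

lemma psi_rel_E1_rng: assumes "e \<in> edges E"
  shows "ideal_cong (L_ideal_nc (ES_graph E S)) (psi_nc E S (GE e) * psi_nc E S (GV (rng E e)))
      (psi_nc E S (GE e) :: (('v + 'v,'e + 'e) gen,'k::field) ncpoly)"
proof -
  have s: "rng E e \<in> verts E" by (rule rng_in_verts[OF wf assms])
  have "ideal_cong (L_ideal_nc (ES_graph E S)) (psi_nc E S (GE e) * psi_nc E S (GV (rng E e)))
      ((if rng (ES_graph E S) (Inl e) = Inl (rng E e) then edg (Inl e) else 0)
      + (if rng E e \<in> split_verts E S then (if rng (ES_graph E S) (Inl e) = Inr (rng E e) then edg
          (Inl e) else 0) else 0)
      + (if rng E e \<in> split_verts E S then (if rng (ES_graph E S) (Inr e) = Inl (rng E e) then edg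
          (Inr e) else 0) else 0)
      + (if rng E e \<in> split_verts E S \<and> rng E e \<in> split_verts E S then
          (if rng (ES_graph E S) (Inr e) = Inr (rng E e) then edg (Inr e) else 0) else 0))"
    unfolding psi_nc_simps if_sum_mult_if_sum
    by (intro ideal_cong_add ideal_cong_if_zero edg_mult_vtx[OF wf_graph_ES[OF wf]])
        (use assms s in auto)
  also have "\<dots> = psi_nc E S (GE e)"
    by (simp add: psi_nc_simps)
  finally show ?thesis .
qed

lemma psi_rel_E2_rng: assumes "e \<in> edges E"
  shows "ideal_cong (L_ideal_nc (ES_graph E S)) (psi_nc E S (GV (rng E e)) * psi_nc E S (GG e))
      (psi_nc E S (GG e) :: (('v + 'v,'e + 'e) gen,'k::field) ncpoly)"
proof -
  have s: "rng E e \<in> verts E" by (rule rng_in_verts[OF wf assms])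
  have "ideal_cong (L_ideal_nc (ES_graph E S)) (psi_nc E S (GV (rng E e)) * psi_nc E S (GG e))
      ((if Inl (rng E e) = rng (ES_graph E S) (Inl e) then ghost (Inl e) else 0)
      + (if rng E e \<in> split_verts E S then (if Inl (rng E e) = rng (ES_graph E S) (Inr e) then ghost
          (Inr e) else 0) else 0)
      + (if rng E e \<in> split_verts E S then (if Inr (rng E e) = rng (ES_graph E S) (Inl e) then ghost
          (Inl e) else 0) else 0)
      + (if rng E e \<in> split_verts E S \<and> rng E e \<in> split_verts E S then
          (if Inr (rng E e) = rng (ES_graph E S) (Inr e) then ghost (Inr e) else 0) else 0))"
    unfolding psi_nc_simps if_sum_mult_if_sum
    by (intro ideal_cong_add ideal_cong_if_zero vtx_mult_ghost[OF wf_graph_ES[OF wf]])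
        (use assms s in auto)
  also have "\<dots> = psi_nc E S (GG e)"
    by (simp add: psi_nc_simps)
  finally show ?thesis .
qed

lemma psi_rel_E2_src: assumes "e \<in> edges E"
  shows "ideal_cong (L_ideal_nc (ES_graph E S)) (psi_nc E S (GG e) * psi_nc E S (GV (src E e)))
      (psi_nc E S (GG e) :: (('v + 'v,'e + 'e) gen,'k::field) ncpoly)"
proof -
  have s: "src E e \<in> verts E" by (rule src_in_verts[OF wf assms])
  have "ideal_cong (L_ideal_nc (ES_graph E S)) (psi_nc E S (GG e) * psi_nc E S (GV (src E e)))
      ((if src (ES_graph E S) (Inl e) = Inl (src E e) then ghost (Inl e) else 0)
      + (if src E e \<in> split_verts E S then (if src (ES_graph E S) (Inl e) = Inr (src E e) then ghost
          (Inl e) else 0) else 0)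
      + (if rng E e \<in> split_verts E S then (if src (ES_graph E S) (Inr e) = Inl (src E e) then ghost
          (Inr e) else 0) else 0)
      + (if rng E e \<in> split_verts E S \<and> src E e \<in> split_verts E S then
          (if src (ES_graph E S) (Inr e) = Inr (src E e) then ghost (Inr e) else 0) else 0))"
    unfolding psi_nc_simps if_sum_mult_if_sum
    by (intro ideal_cong_add ideal_cong_if_zero ghost_mult_vtx[OF wf_graph_ES[OF wf]])
        (use assms s in auto)
  also have "\<dots> = psi_nc E S (GG e)"
    by (simp add: psi_nc_simps)
  finally show ?thesis .
qed

lemma psi_rel_CK1: assumes "e \<in> edges E" "f \<in> edges E"
  shows "ideal_cong (L_ideal_nc (ES_graph E S)) (psi_nc E S (GG e) * psi_nc E S (GE f))
      (if e = f then psi_nc E S (GV (rng E e)) else (0::(('v + 'v,'e + 'e) gen,'k::field) ncpoly))"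
proof -
  have "ideal_cong (L_ideal_nc (ES_graph E S)) (psi_nc E S (GG e) * psi_nc E S (GE f))
      ((if (Inl e :: 'e + 'e) = Inl f then vtx (rng (ES_graph E S) (Inl e)) else 0)
      + (if rng E f \<in> split_verts E S then
          (if Inl e = Inr f then vtx (rng (ES_graph E S) (Inl e)) else 0) else 0)
      + (if rng E e \<in> split_verts E S then
          (if Inr e = Inl f then vtx (rng (ES_graph E S) (Inr e)) else 0) else 0)
      + (if rng E e \<in> split_verts E S \<and> rng E f \<in> split_verts E S then
          (if Inr e = (Inr f :: 'e + 'e) then vtx (rng (ES_graph E S) (Inr e)) else 0) else 0))"
    unfolding psi_nc_simps if_sum_mult_if_sum
    by (intro ideal_cong_add ideal_cong_if_zero ghost_mult_edg_rel) (use assms in auto)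
  also have "\<dots> = (if e = f then psi_nc E S (GV (rng E e)) else 0)"
    by (cases "e = f") (auto simp: psi_nc_simps)
  finally show ?thesis .
qed

lemma edg_mult_ghost_rng_distinct: assumes "a \<in> edges (ES_graph E S)" "b \<in> edges (ES_graph E S)"
    "rng (ES_graph E S) a \<noteq> rng (ES_graph E S) b"
  shows "ideal_cong (L_ideal_nc (ES_graph E S)) (edg a * ghost b)
      (0::(('v + 'v,'e + 'e) gen,'k::field) ncpoly)"
proof -
  have "ideal_cong (L_ideal_nc (ES_graph E S)) (edg a * ghost b)
      ((edg a * vtx (rng (ES_graph E S) a)) * ghost b)"
    by (rule ideal_cong_rmult[OF ideal_cong_sym[OF edg_mult_rng_rel[OF assms(1)]]])
        (use assms in auto)
  also have "(edg a * vtx (rng (ES_graph E S) a)) * ghost b = edg a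
      * (vtx (rng (ES_graph E S) a) * ghost b)" by (simp add: mult.assoc)
  also have "ideal_cong (L_ideal_nc (ES_graph E S)) \<dots>
      (edg a * (if rng (ES_graph E S) a = rng (ES_graph E S) b then ghost b else 0))"
    by (rule ideal_cong_lmult[OF vtx_mult_ghost[OF wf_graph_ES[OF wf]]])
        (use assms rng_in_verts[OF wf_graph_ES[OF wf]] in auto)
  finally show ?thesis using assms by simp
qed

lemma psi_edge_pair:
  assumes e: "e \<in> edges E"
  shows "ideal_cong (L_ideal_nc (ES_graph E S)) (psi_nc E S (GE e) * psi_nc E S (GG e))
    (edg (Inl e) * ghost (Inl e)
      + (if rng E e \<in> split_verts E S then edg (Inr e) * ghost (Inr e) else
          (0::(_,'k::field) ncpoly)))"
proof -
  let ?T = "split_verts E S"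
  have "ideal_cong (L_ideal_nc (ES_graph E S)) (psi_nc E S (GE e) * psi_nc E S (GG e))
     (edg (Inl e) * ghost (Inl e) + (if rng E e \<in> ?T then 0 else 0)
         + (if rng E e \<in> ?T then 0 else 0)
       + (if rng E e \<in> ?T \<and> rng E e \<in> ?T then edg (Inr e) * ghost (Inr e) else 0))"
    unfolding psi_nc_simps if_sum_mult_if_sum
    by (intro ideal_cong_add ideal_cong_if_zero ideal_cong_refl edg_mult_ghost_rng_distinct)
        (use e in auto)
  then show ?thesis by simp
qed

lemma psi_edge_sum:
  assumes "v \<in> verts E"
  shows "ideal_cong (L_ideal_nc (ES_graph E S))
      (\<Sum>e\<in>out_edges E v. psi_nc E S (GE e) * psi_nc E S (GG e))
    (edge_sum (ES_graph E S) (Inl v) :: (('v + 'v,'e + 'e) gen,'k::field) ncpoly)"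
proof (cases "finite (out_edges E v)")
  case False
  then have "infinite (out_edges (ES_graph E S) (Inl v))"
    unfolding out_edges_ES_Inl using finite_imageD[of Inl "out_edges E v"]
        by (auto simp: inj_on_def)
  then show ?thesis using False by (simp add: edge_sum_def)
next
  case True
  show ?thesis
    unfolding edge_sum_ES_Inl[OF True]
    by (intro ideal_cong_sum psi_edge_pair) (simp add: out_edges_def)
qed

lemma psi_rel_CK2: assumes "v \<in> S"
  shows "ideal_cong (L_ideal_nc (ES_graph E S)) (psi_nc E S (GV v))
      (\<Sum>e\<in>out_edges E v. psi_nc E S (GE e) * psi_nc E S (GG e)
        :: (('v + 'v,'e + 'e) gen,'k::field) ncpoly)"
proof -
  have v: "v \<in> regular E" "v \<in> verts E" using assms SR regular_verts[of E] by auto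
  have "psi_nc E S (GV v) = vtx (Inl v)" using assms by (simp add: psi_nc_simps)
  also have "ideal_cong (L_ideal_nc (ES_graph E S)) \<dots> (edge_sum (ES_graph E S) (Inl v))"
    by (rule vtx_edge_sum_rel) (use v in \<open>simp add: regular_ES\<close>)
  also have "ideal_cong (L_ideal_nc (ES_graph E S)) \<dots>
      (\<Sum>e\<in>out_edges E v. psi_nc E S (GE e) * psi_nc E S (GG e))"
    by (rule ideal_cong_sym[OF psi_edge_sum[OF v(2)]])
  finally show ?thesis .
qed

lemma psi_rels: assumes "r \<in> CL_rels_nc E S"
  shows "nc_eval (psi_nc E S) r \<in> L_ideal_nc (ES_graph E S)"
proof -
  from assms consider
      (1) v w where "r = vtx v * vtx w - (if v = w then vtx v else 0)" "v \<in> verts E" "w \<in> verts E"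
    | (2) e where "r = vtx (src E e) * edg e - edg e" "e \<in> edges E"
    | (3) e where "r = edg e * vtx (rng E e) - edg e" "e \<in> edges E"
    | (4) e where "r = vtx (rng E e) * ghost e - ghost e" "e \<in> edges E"
    | (5) e where "r = ghost e * vtx (src E e) - ghost e" "e \<in> edges E"
    | (6) e f where "r = ghost e * edg f - (if e = f then vtx (rng E e) else 0)"
        "e \<in> edges E" "f \<in> edges E"
    | (7) v where "r = vtx v - edge_sum E v" "v \<in> S"
    unfolding CL_rels_nc_def by blast
  then show ?thesis
  proof cases
    case 1 then show ?thesis using psi_rel_V[of v w] by (cases "v = w")
        (simp_all add: nc_eval_diff nc_eval_mult ideal_cong_def)
  next
    case 2 then show ?thesis using psi_rel_E1_src
        by (simp add: nc_eval_diff nc_eval_mult ideal_cong_def)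
  next
    case 3 then show ?thesis using psi_rel_E1_rng
        by (simp add: nc_eval_diff nc_eval_mult ideal_cong_def)
  next
    case 4 then show ?thesis using psi_rel_E2_rng
        by (simp add: nc_eval_diff nc_eval_mult ideal_cong_def)
  next
    case 5 then show ?thesis using psi_rel_E2_src
        by (simp add: nc_eval_diff nc_eval_mult ideal_cong_def)
  next
    case 6 then show ?thesis using psi_rel_CK1[of e f] by (cases "e = f")
        (simp_all add: nc_eval_diff nc_eval_mult ideal_cong_def)
  next
    case 7 then show ?thesis using psi_rel_CK2
        by (simp add: nc_eval_diff nc_eval_edge_sum ideal_cong_def)
  qed
qed

end

context
  fixes E :: "('v,'e) graph" and S :: "'v set" and c :: "'k::field \<Rightarrow> 'k"
  assumes wf: "wf_graph E" and SR: "S \<subseteq> regular E" and c: "involution c"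
begin

lemma nc_over_phi: "g \<in> gens (ES_graph E S) \<Longrightarrow> nc_over (gens E) (phi_nc c E S g)"
proof (cases g)
  case (GV x)
  assume "g \<in> gens (ES_graph E S)"
  then show ?thesis using GV nc_over_phi_v_verts[OF wf SR] by simp
next
  case (GE a)
  assume "g \<in> gens (ES_graph E S)"
  then have "a \<in> edges (ES_graph E S)" using GE by simp
  then show ?thesis using GE nc_over_phi_v_rng[OF wf SR] base_edge_edges
      by (auto simp: phi_e_base_edge intro!: nc_over_mult)
next
  case (GG a)
  assume "g \<in> gens (ES_graph E S)"
  then have "a \<in> edges (ES_graph E S)" using GG by simp
  then show ?thesis using GG nc_over_phi_v_rng[OF wf SR] base_edge_edges
      phi_nc_ghost_base_edge[OF wf SR c, of a]
    by (auto intro!: nc_over_mult)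
qed

lemma phi_psi_gen: assumes "g \<in> gens E"
  shows "ideal_cong (CL_ideal_nc E S) (nc_eval (phi_nc c E S) (psi_nc E S g)) (single [g] 1)"
proof (cases g)
  case (GV v)
  have "nc_eval (phi_nc c E S) (psi_nc E S g) = phi_v E S (Inl v)
      + (if v \<in> split_verts E S then phi_v E S (Inr v) else 0)"
    using GV by (simp add: psi_nc_simps nc_eval_add nc_eval_if_zero)
  also have "\<dots> = vtx v" by (rule phi_v_split[OF wf SR])
  finally show ?thesis using GV by (simp add: vtx_def)
next
  case (GE e)
  then have e: "e \<in> edges E" using assms by simp
  have "nc_eval (phi_nc c E S) (psi_nc E S g)
      = edg e * (phi_v E S (Inl (rng E e))
          + (if rng E e \<in> split_verts E S then phi_v E S (Inr (rng E e)) else 0))"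
    using GE by (simp add: psi_nc_simps nc_eval_add nc_eval_if_zero phi_e_def distrib_left)
  also have "\<dots> = edg e * vtx (rng E e)" by (simp only: phi_v_split[OF wf SR])
  also have "ideal_cong (CL_ideal_nc E S) \<dots> (edg e)" by (rule edg_mult_rng_rel[OF e])
  finally show ?thesis using GE by (simp add: edg_def)
next
  case (GG e)
  then have e: "e \<in> edges E" using assms by simp
  have "nc_eval (phi_nc c E S) (psi_nc E S g)
      = (phi_v E S (Inl (rng E e)) + (if rng E e \<in> split_verts E S then phi_v E S (Inr (rng E e))
      else 0)) * ghost e"
    using GG by (simp add: psi_nc_simps nc_eval_add nc_eval_if_zero phi_nc_ghost[OF c] distrib_right
        del: phi_nc_simps)
  also have "\<dots> = vtx (rng E e) * ghost e" by (simp only: phi_v_split[OF wf SR])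
  also have "ideal_cong (CL_ideal_nc E S) \<dots> (ghost e)" by (rule rng_mult_ghost_rel[OF e])
  finally show ?thesis using GG by (simp add: ghost_def)
qed

lemma psi_phi_v: assumes "y \<in> verts (ES_graph E S)"
  shows "ideal_cong (L_ideal_nc (ES_graph E S)) (nc_eval (psi_nc E S) (phi_v E S y)) (vtx y)"
proof (cases y)
  case (Inl v)
  then have v: "v \<in> verts E" using assms by auto
  show ?thesis
  proof (cases "v \<in> split_verts E S")
    case True
    have "nc_eval (psi_nc E S) (phi_v E S y)
        = (\<Sum>e\<in>out_edges E v. psi_nc E S (GE e) * psi_nc E S (GG e))"
      using Inl True by (simp add: phi_v_def nc_eval_edge_sum)
    also have "ideal_cong (L_ideal_nc (ES_graph E S)) \<dots> (edge_sum (ES_graph E S) (Inl v))"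
        by (rule psi_edge_sum[OF wf SR v])
    also have "ideal_cong (L_ideal_nc (ES_graph E S)) \<dots> (vtx (Inl v))"
      by (rule ideal_cong_sym[OF vtx_edge_sum_rel]) (use True in \<open>simp add: regular_ES\<close>)
    finally show ?thesis using Inl by simp
  next
    case False
    then show ?thesis using Inl by (auto simp add: phi_v_def psi_nc_simps)
  qed
next
  case (Inr v)
  then have v: "v \<in> split_verts E S" "v \<in> verts E" using assms regular_verts[of E] by auto
  have "nc_eval (psi_nc E S) (phi_v E S y) = (vtx (Inl v) + vtx (Inr v))
      - (\<Sum>e\<in>out_edges E v. psi_nc E S (GE e) * psi_nc E S (GG e))"
    using Inr v by (simp add: phi_v_def nc_eval_edge_sum nc_eval_diff psi_nc_simps)
  also have "ideal_cong (L_ideal_nc (ES_graph E S)) \<dots> ((vtx (Inl v) + vtx (Inr v)) - vtx (Inl v))"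
  proof (rule ideal_cong_diff[OF ideal_cong_refl])
    have "ideal_cong (L_ideal_nc (ES_graph E S))
        (\<Sum>e\<in>out_edges E v. psi_nc E S (GE e) * psi_nc E S (GG e)) (edge_sum (ES_graph E S) (Inl v))"
      by (rule psi_edge_sum[OF wf SR v(2)])
    also have "ideal_cong (L_ideal_nc (ES_graph E S)) \<dots> (vtx (Inl v))"
      by (rule ideal_cong_sym[OF vtx_edge_sum_rel]) (use v in \<open>simp add: regular_ES\<close>)
    finally show "ideal_cong (L_ideal_nc (ES_graph E S))
        (\<Sum>e\<in>out_edges E v. psi_nc E S (GE e) * psi_nc E S (GG e)) (vtx (Inl v))" .
  qed
  also have "(vtx (Inl v) + vtx (Inr v)) - vtx (Inl v) = vtx y" using Inr by simp
  finally show ?thesis .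
qed

lemma psi_phi_gen: assumes "x \<in> gens (ES_graph E S)"
  shows "ideal_cong (L_ideal_nc (ES_graph E S)) (nc_eval (psi_nc E S) (phi_nc c E S x))
      (single [x] 1)"
proof (cases x)
  case (GV y)
  then show ?thesis using psi_phi_v assms by (simp add: vtx_def)
next
  case (GE a)
  then have a: "a \<in> edges (ES_graph E S)" using assms by simp
  let ?r = "rng (ES_graph E S) a"
  have r: "?r \<in> verts (ES_graph E S)" using rng_ES_verts[OF wf SR a] .
  have "nc_eval (psi_nc E S) (phi_nc c E S x)
      = psi_nc E S (GE (base_edge a)) * nc_eval (psi_nc E S) (phi_v E S ?r)"
    using GE by (simp add: phi_e_base_edge nc_eval_mult)
  also have "ideal_cong (L_ideal_nc (ES_graph E S)) \<dots> (psi_nc E S (GE (base_edge a)) * vtx ?r)"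
    by (rule ideal_cong_lmult[OF psi_phi_v[OF r] nc_over_psi[OF wf SR]])
        (use base_edge_edges[OF a] in simp)
  also have "\<dots> = edg (Inl (base_edge a)) * vtx ?r
      + (if rng E (base_edge a) \<in> split_verts E S then edg (Inr (base_edge a)) * vtx ?r else 0)"
    by (simp add: psi_nc_simps distrib_right)
  also have "ideal_cong (L_ideal_nc (ES_graph E S)) \<dots>
      ((if rng (ES_graph E S) (Inl (base_edge a)) = ?r then edg (Inl (base_edge a)) else 0)
      + (if rng E (base_edge a) \<in> split_verts E S then
          (if rng (ES_graph E S) (Inr (base_edge a)) = ?r then edg (Inr (base_edge a)) else 0)
         else 0))"
    by (intro ideal_cong_add ideal_cong_if_zero edg_mult_vtx[OF wf_graph_ES[OF wf]])
        (use r base_edge_edges[OF a] in auto)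
  also have "\<dots> = edg a" using a by (cases a) auto
  finally show ?thesis using GE by (simp add: edg_def)
next
  case (GG a)
  then have a: "a \<in> edges (ES_graph E S)" using assms by simp
  let ?r = "rng (ES_graph E S) a"
  have r: "?r \<in> verts (ES_graph E S)" using rng_ES_verts[OF wf SR a] .
  have "nc_eval (psi_nc E S) (phi_nc c E S x) = nc_eval (psi_nc E S) (phi_v E S ?r) * psi_nc E S
      (GG (base_edge a))"
    using GG phi_nc_ghost_base_edge[OF wf SR c, of a] by (simp add: nc_eval_mult del: phi_nc_simps)
  also have "ideal_cong (L_ideal_nc (ES_graph E S)) \<dots> (vtx ?r * psi_nc E S (GG (base_edge a)))"
    by (rule ideal_cong_rmult[OF psi_phi_v[OF r] nc_over_psi[OF wf SR]])
        (use base_edge_edges[OF a] in simp)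
  also have "\<dots> = vtx ?r * ghost (Inl (base_edge a))
      + (if rng E (base_edge a) \<in> split_verts E S then vtx ?r * ghost (Inr (base_edge a)) else 0)"
    by (simp add: psi_nc_simps distrib_left)
  also have "ideal_cong (L_ideal_nc (ES_graph E S)) \<dots>
      ((if ?r = rng (ES_graph E S) (Inl (base_edge a)) then ghost (Inl (base_edge a)) else 0)
      + (if rng E (base_edge a) \<in> split_verts E S then
          (if ?r = rng (ES_graph E S) (Inr (base_edge a)) then ghost (Inr (base_edge a)) else 0)
         else 0))"
    by (intro ideal_cong_add ideal_cong_if_zero vtx_mult_ghost[OF wf_graph_ES[OF wf]])
        (use r base_edge_edges[OF a] in auto)
  also have "\<dots> = ghost a" using a by (cases a) auto
  finally show ?thesis using GG by (simp add: ghost_def)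
qed

end

theorem lemma4p8:
  fixes E :: "('v,'e) graph" and S :: "'v set" and cnj :: "'k::field \<Rightarrow> 'k"
  assumes wf: "wf_graph E"
    and S: "S \<subseteq> regular E"
    and cnj_add: "\<And>a b. cnj (a + b) = cnj a + cnj b"
    and cnj_mult: "\<And>a b. cnj (a * b) = cnj a * cnj b"
    and cnj_inv: "\<And>a. cnj (cnj a) = a"
  defines "X1 \<equiv> gens (ES_graph E S)"
    and "I1 \<equiv> L_ideal (ES_graph E S)"
    and "X2 \<equiv> gens E"
    and "I2 \<equiv> CL_ideal E S"
    and "\<Phi> \<equiv> fa_eval (phi_gen cnj E S)"
  shows
    \<comment> \<open>existence: phi extends to a K-algebra homomorphism L_K(E_S) -> CL_K(E,S)\<close>
    "hom_mod X1 I1 X2 I2 \<Phi>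
     \<and> (\<forall>x\<in>X1. fa_diff (\<Phi> (ghat x)) (phi_gen cnj E S x) \<in> I2)
     \<comment> \<open>injective\<close>
     \<and> (\<forall>p\<in>fa_carrier X1. \<Phi> p \<in> I2 \<longrightarrow> p \<in> I1)
     \<comment> \<open>surjective\<close>
     \<and> (\<forall>q\<in>fa_carrier X2. \<exists>p\<in>fa_carrier X1. fa_diff (\<Phi> p) q \<in> I2)
     \<comment> \<open>star-preserving\<close>
     \<and> (\<forall>p\<in>fa_carrier X1. fa_diff (\<Phi> (fa_star cnj p)) (fa_star cnj (\<Phi> p)) \<in> I2)
     \<comment> \<open>uniqueness\<close>
     \<and> (\<forall>\<Psi>. hom_mod X1 I1 X2 I2 \<Psi>
            \<and> (\<forall>x\<in>X1. fa_diff (\<Psi> (ghat x)) (phi_gen cnj E S x) \<in> I2)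
            \<longrightarrow> (\<forall>p\<in>fa_carrier X1. fa_diff (\<Psi> p) (\<Phi> p) \<in> I2))"
proof -
  have c: "involution cnj" unfolding involution_def using cnj_add cnj_mult cnj_inv by blast
  have iso: "hom_mod X1 I1 X2 I2 \<Phi>
    \<and> (\<forall>x\<in>X1. fa_diff (\<Phi> (ghat x)) (phi_gen cnj E S x) \<in> I2)
    \<and> (\<forall>p\<in>fa_carrier X1. \<Phi> p \<in> I2 \<longrightarrow> p \<in> I1)
    \<and> (\<forall>q\<in>fa_carrier X2. \<exists>p\<in>fa_carrier X1. fa_diff (\<Phi> p) q \<in> I2)
    \<and> (\<forall>\<Psi>. hom_mod X1 I1 X2 I2 \<Psi>
          \<and> (\<forall>x\<in>X1. fa_diff (\<Psi> (ghat x)) (phi_gen cnj E S x) \<in> I2)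
          \<longrightarrow> (\<forall>p\<in>fa_carrier X1. fa_diff (\<Psi> p) (\<Phi> p) \<in> I2))"
    unfolding X1_def I1_def X2_def I2_def \<Phi>_def L_ideal_def CL_ideal_lookup phi_gen_lookup[OF c]
    by (rule fa_eval_iso[where G="psi_nc E S"])
      (use nc_over_phi[OF wf S c] nc_over_psi[OF wf S] phi_rels[OF wf S c] psi_rels[OF wf S]
        psi_phi_gen[OF wf S c] phi_psi_gen[OF wf S c] in auto)
  have star: "\<forall>p\<in>fa_carrier X1. fa_diff (\<Phi> (fa_star cnj p)) (fa_star cnj (\<Phi> p)) \<in> I2"
  proof
    fix p :: "(('v + 'v,'e + 'e) gen,'k) fa" assume "p \<in> fa_carrier X1"
    then have "\<Phi> (fa_star cnj p) = fa_star cnj (\<Phi> p)"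
      unfolding X1_def \<Phi>_def phi_gen_lookup[OF c]
      by (rule fa_eval_fa_star[OF c, where F="phi_nc cnj E S"]) (rule phi_nc_gstar[OF c])
    then show "fa_diff (\<Phi> (fa_star cnj p)) (fa_star cnj (\<Phi> p)) \<in> I2"
      by (simp add: I2_def CL_ideal_lookup fa_diff_self_in_ideal)
  qed
  from iso star show ?thesis by (elim conjE) (intro conjI; assumption)
qed

end
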